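(* Let $\mathbb{G}$ be a stratified group, $\mathbb{M}$ a graded group of step $\upsilon$ with Lie algebra $\mathcal{M}=W_1\oplus\cdots\oplus W_\upsilon$, $\Omega\subset\mathbb{G}$ open, and let $f:\Omega\to\mathbb{M}$ be P-differentiable at $x\in\Omega$. Write $f=\exp\circ F$, $F=F_1+\cdots+F_\upsilon$ with $F_j:\Omega\to W_j$. Then every $F_j$ is P-differentiable at $x$ and $$\pi_1\circ df(x)=dF_1(x),\qquad dF_i(x)(h)=\sum_{n=2}^{\upsilon}\frac{(-1)^n}{n!}\,\pi_i\big([F(x),dF(x)(h)]_{n-1}\big)$$ for every $i=2,\ldots,\upsilon$ and every $h\in\mathcal{G}$, where $dF(x)=\sum_jdF_j(x)$.
   Context: Graded group: connected simply connected real Lie group with Lie algebra $V_1\oplus\cdots\oplus V_\iota$, $[V_i,V_j]\subset V_{i+j}$; stratified if $[V_i,V_j]=V_{i+j}$; $\mathcal{G}$ is the Lie algebra of $\mathbb{G}$; dilations act by $r^i$ on the $i$-th layer. Homogeneous distances $d$ on $\mathbb{G}$, $\rho$ on $\mathbb{M}$: continuous, left invariant, 1-homogeneous under dilations. h-homomorphism: group homomorphism commuting with dilations. $f$ is P-differentiable at $x$ if there is an h-homomorphism $Df(x)$ with $\rho(f(x)^{-1}f(xh),Df(x)(h))/d(h,e)\to0$ as $h\to e$; $df(x)=\exp^{-1}\circ Df(x)\circ\exp$. Vector spaces $W$ are graded groups $(W,+)$ with one layer and dilations $v\mapsto rv$, giving P-differentiability of $F_j$. $\pi_j$ projects $\mathcal{M}$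 onto $W_j$; $[X,Y]_0=Y$, $[X,Y]_k=[X,[X,Y]_{k-1}]$. *)

theory Defs
  imports "HOL-Analysis.Analysis"
begin

text \<open>Graded groups are modelled in exponential coordinates: the group is its
Lie algebra (a finite-dimensional real vector space, type of class euclidean_space),
the exponential map is the identity, and the group law is the
Baker-Campbell-Hausdorff product given by Dynkin's formula (a finite sum by
nilpotency). Identity is 0, the inverse of x is -x.\<close>

definition graded_algebra :: "('a::euclidean_space \<Rightarrow> 'a \<Rightarrow> 'a) \<Rightarrow> (nat \<Rightarrow> 'a set) \<Rightarrow> nat \<Rightarrow> bool" where
  "graded_algebra br V s \<longleftrightarrow>
     1 \<le> s \<and> bilinear br \<and> (\<forall>x y. br x y = - br y x) \<and>
     (\<forall>x y z. br x (br y z) + br y (br z x) + br z (br x y) = 0) \<and>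
     (\<forall>i. subspace (V i)) \<and> (\<forall>i. (i = 0 \<or> s < i) \<longrightarrow> V i = {0}) \<and>
     (\<forall>x. \<exists>!v. (\<forall>i. v i \<in> V i) \<and> x = (\<Sum>i=1..s. v i)) \<and>
     (\<forall>i j x y. x \<in> V i \<longrightarrow> y \<in> V j \<longrightarrow> br x y \<in> V (i + j))"

definition stratified :: "('a::euclidean_space \<Rightarrow> 'a \<Rightarrow> 'a) \<Rightarrow> (nat \<Rightarrow> 'a set) \<Rightarrow> nat \<Rightarrow> bool" where
  "stratified br V s \<longleftrightarrow> graded_algebra br V s \<and>
     (\<forall>i j. 1 \<le> i \<longrightarrow> 1 \<le> j \<longrightarrow> span {br x y | x y. x \<in> V i \<and> y \<in> V j} = V (i + j))"

definition graded_of_step :: "('a::euclidean_space \<Rightarrow> 'a \<Rightarrow> 'a) \<Rightarrow> (nat \<Rightarrow> 'a set) \<Rightarrow> nat \<Rightarrow> bool" where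
  "graded_of_step br V s \<longleftrightarrow> graded_algebra br V s \<and> V s \<noteq> {0}"

definition layer :: "(nat \<Rightarrow> 'a::euclidean_space set) \<Rightarrow> nat \<Rightarrow> nat \<Rightarrow> 'a \<Rightarrow> 'a" where
  "layer V s i x = (THE v. (\<forall>k. v k \<in> V k) \<and> x = (\<Sum>k=1..s. v k)) i"

definition dil :: "(nat \<Rightarrow> 'a::euclidean_space set) \<Rightarrow> nat \<Rightarrow> real \<Rightarrow> 'a \<Rightarrow> 'a" where
  "dil V s r x = (\<Sum>i=1..s. (r ^ i) *\<^sub>R layer V s i x)"

fun nbr :: "('a::zero \<Rightarrow> 'a \<Rightarrow> 'a) \<Rightarrow> 'a list \<Rightarrow> 'a" where
  "nbr br [] = 0"
| "nbr br [a] = a"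
| "nbr br (a # b # l) = br a (nbr br (b # l))"

definition dynkin_word :: "'a \<Rightarrow> 'a \<Rightarrow> (nat \<times> nat) list \<Rightarrow> 'a list" where
  "dynkin_word x y rs = concat (map (\<lambda>(r, t). replicate r x @ replicate t y) rs)"

definition dynkin_tuples :: "nat \<Rightarrow> nat \<Rightarrow> (nat \<times> nat) list set" where
  "dynkin_tuples s n = {rs. length rs = n \<and> (\<forall>p\<in>set rs. 0 < fst p + snd p)
                          \<and> sum_list (map (\<lambda>p. fst p + snd p) rs) \<le> s}"

definition dynkin_coeff :: "(nat \<times> nat) list \<Rightarrow> real" where
  "dynkin_coeff rs = 1 / (real (sum_list (map (\<lambda>p. fst p + snd p) rs))
                        * prod_list (map (\<lambda>p. fact (fst p) * fact (snd p)) rs))"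

text \<open>BCH product (Dynkin's formula, truncated at the step s; longer brackets vanish).\<close>
definition bch :: "('a::euclidean_space \<Rightarrow> 'a \<Rightarrow> 'a) \<Rightarrow> nat \<Rightarrow> 'a \<Rightarrow> 'a \<Rightarrow> 'a" where
  "bch br s x y = (\<Sum>n=1..s. ((-1) ^ (n - 1) / real n) *\<^sub>R
       (\<Sum>rs\<in>dynkin_tuples s n. dynkin_coeff rs *\<^sub>R nbr br (dynkin_word x y rs)))"

definition hom_dist :: "('a::euclidean_space \<Rightarrow> 'a \<Rightarrow> 'a) \<Rightarrow> (nat \<Rightarrow> 'a set) \<Rightarrow> nat \<Rightarrow> ('a \<Rightarrow> 'a \<Rightarrow> real) \<Rightarrow> bool" where
  "hom_dist br V s d \<longleftrightarrow>
     (\<forall>x y. d x y = 0 \<longleftrightarrow> x = y) \<and> (\<forall>x y. d x y = d y x) \<and>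
     (\<forall>x y z. d x z \<le> d x y + d y z) \<and>
     continuous_on UNIV (\<lambda>p. d (fst p) (snd p)) \<and>
     (\<forall>z x y. d (bch br s z x) (bch br s z y) = d x y) \<and>
     (\<forall>r>0. \<forall>x y. d (dil V s r x) (dil V s r y) = r * d x y)"

definition hhom :: "('a::euclidean_space \<Rightarrow> 'a \<Rightarrow> 'a) \<Rightarrow> (nat \<Rightarrow> 'a set) \<Rightarrow> nat \<Rightarrow>
                    ('b::euclidean_space \<Rightarrow> 'b \<Rightarrow> 'b) \<Rightarrow> (nat \<Rightarrow> 'b set) \<Rightarrow> nat \<Rightarrow> ('a \<Rightarrow> 'b) \<Rightarrow> bool" where
  "hhom brG VG sG brM VM sM L \<longleftrightarrow>
     (\<forall>x y. L (bch brG sG x y) = bch brM sM (L x) (L y)) \<and>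
     (\<forall>r>0. \<forall>x. L (dil VG sG r x) = dil VM sM r (L x))"

text \<open>L is the P-differential Df(x) (= df(x), as exp is the identity) of f at x.\<close>
definition P_diff :: "('a::euclidean_space \<Rightarrow> 'a \<Rightarrow> 'a) \<Rightarrow> (nat \<Rightarrow> 'a set) \<Rightarrow> nat \<Rightarrow> ('a \<Rightarrow> 'a \<Rightarrow> real) \<Rightarrow>
                    ('b::euclidean_space \<Rightarrow> 'b \<Rightarrow> 'b) \<Rightarrow> (nat \<Rightarrow> 'b set) \<Rightarrow> nat \<Rightarrow> ('b \<Rightarrow> 'b \<Rightarrow> real) \<Rightarrow>
                    ('a \<Rightarrow> 'b) \<Rightarrow> 'a \<Rightarrow> ('a \<Rightarrow> 'b) \<Rightarrow> bool" where
  "P_diff brG VG sG d brM VM sM \<rho> f x L \<longleftrightarrow>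
     hhom brG VG sG brM VM sM L \<and>
     ((\<lambda>h. \<rho> (bch brM sM (- f x) (f (bch brG sG x h))) (L h) / d h 0) \<longlongrightarrow> 0) (at 0)"

text \<open>P-differential of a map into a vector space W (graded group (W,+), one layer,
dilations v \<mapsto> r v, homogeneous distance given by the norm).\<close>
definition P_diff_vec :: "('a::euclidean_space \<Rightarrow> 'a \<Rightarrow> 'a) \<Rightarrow> (nat \<Rightarrow> 'a set) \<Rightarrow> nat \<Rightarrow> ('a \<Rightarrow> 'a \<Rightarrow> real) \<Rightarrow>
                    'b::euclidean_space set \<Rightarrow> ('a \<Rightarrow> 'b) \<Rightarrow> 'a \<Rightarrow> ('a \<Rightarrow> 'b) \<Rightarrow> bool" where
  "P_diff_vec brG VG sG d W F x L \<longleftrightarrow>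
     (\<forall>h. L h \<in> W) \<and>
     (\<forall>a b. L (bch brG sG a b) = L a + L b) \<and>
     (\<forall>r>0. \<forall>h. L (dil VG sG r h) = r *\<^sub>R L h) \<and>
     ((\<lambda>h. norm ((- F x + F (bch brG sG x h)) - L h) / d h 0) \<longlongrightarrow> 0) (at 0)"

definition iter_br :: "('a \<Rightarrow> 'a \<Rightarrow> 'a) \<Rightarrow> nat \<Rightarrow> 'a \<Rightarrow> 'a \<Rightarrow> 'a" where
  "iter_br br k X Y = (br X ^^ k) Y"

end

(* In exponential coordinates put X = f x, g h = X\<inverse>\<cdot>f(x\<cdot>h) and Y h = f(x\<cdot>h) - X, so that
   g h = (-X)\<cdot>(X + Y h).  P-differentiability says (Df h)\<inverse>\<cdot>g h = o(d h 0).  The h-homomorphism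
   Df is Lipschitz at 0 for the homogeneous distances, so Df h = O(d h 0) and its layers of degree
   at least two are o(d h 0); as the BCH product is addition to first order at the origin,
   g h = \<pi>\<^sub>1 (Df h) + o(d h 0).  On the other hand the derivative of Y \<mapsto> (-X)\<cdot>(X + Y) at 0 is
   dexp X = (1 - e\<^sup>-\<^sup>a\<^sup>d \<^sup>X) / ad X, which is unipotent, hence Y h = dexp\<inverse> X (\<pi>\<^sub>1 (Df h)) + o(d h 0).
   So the differentials dF\<^sub>j are the layers of dexp\<inverse> X (\<pi>\<^sub>1 (Df h)), and the stated formula for
   them is the equation \<pi>\<^sub>i (dexp X (dF h)) = 0 for i \<ge> 2.  Computing dexp from Dynkin's
   formula reduces to a combinatorial identity for Dynkin's coefficients. *)

theory Submission
  imports Defs "HOL-Library.Landau_Symbols"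
begin

section \<open>Graded Lie algebras: layers and the filtration\<close>

locale graded_group =
  fixes br :: "'a::euclidean_space \<Rightarrow> 'a \<Rightarrow> 'a" and V :: "nat \<Rightarrow> 'a set" and s :: nat
  assumes graded: "graded_algebra br V s"
begin

abbreviation pr :: "nat \<Rightarrow> 'a \<Rightarrow> 'a" where "pr \<equiv> layer V s"

lemma graded_algebraD:
  "1 \<le> s" "bilinear br" "\<forall>x y. br x y = - br y x" "\<forall>i. subspace (V i)"
  "\<forall>i. i = 0 \<or> s < i \<longrightarrow> V i = {0}" "\<forall>x. \<exists>!v. (\<forall>i. v i \<in> V i) \<and> x = (\<Sum>i=1..s. v i)"
  "\<forall>i j x y. x \<in> V i \<longrightarrow> y \<in> V j \<longrightarrow> br x y \<in> V (i + j)"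
  by (insert graded[unfolded graded_algebra_def]; elim conjE; assumption)+

lemmas step_ge_1 = graded_algebraD(1)
lemmas bilinear_br = graded_algebraD(2)

lemma br_anticomm: "br x y = - br y x"
  using graded_algebraD(3) by blast

lemma subspace_V: "subspace (V i)"
  using graded_algebraD(4) by blast

lemma V_trivial: "i = 0 \<or> s < i \<Longrightarrow> V i = {0}"
  using graded_algebraD(5) by blast

lemma ex1_layer_decomposition: "\<exists>!v. (\<forall>i. v i \<in> V i) \<and> x = (\<Sum>i=1..s. v i)"
  using graded_algebraD(6) by blast

lemma br_V: "x \<in> V i \<Longrightarrow> y \<in> V j \<Longrightarrow> br x y \<in> V (i + j)"
  using graded_algebraD(7) by blast

lemma bounded_bilinear_br: "bounded_bilinear br"
  using bilinear_br bilinear_conv_bounded_bilinear by blast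

lemma linear_br: "linear (br X)"
  using bilinear_br unfolding bilinear_def by blast

lemma br_self: "br x x = 0"
  using br_anticomm[of x x] by (simp add: eq_neg_iff_add_eq_0 flip: scaleR_2)

lemma linear_ad_power: "linear (br X ^^ k)"
  by (induction k) (simp_all add: linear_id[unfolded id_def] linear_compose[OF _ linear_br, unfolded o_def])

lemma layer_unique:
  assumes "\<forall>k. v k \<in> V k" "x = (\<Sum>k=1..s. v k)"
  shows "pr i x = v i"
proof -
  have "(THE v. (\<forall>k. v k \<in> V k) \<and> x = (\<Sum>k=1..s. v k)) = v"
    by (rule the1_equality[OF ex1_layer_decomposition]) (use assms in auto)
  then show ?thesis unfolding layer_def by simp
qed

lemma layer_decomposition: "(\<forall>k. pr k x \<in> V k) \<and> x = (\<Sum>k=1..s. pr k x)"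
  unfolding layer_def by (rule theI'[OF ex1_layer_decomposition])

lemma layer_in_V: "pr k x \<in> V k"
  using layer_decomposition by blast

lemma sum_layers: "(\<Sum>k=1..s. pr k x) = x"
  using layer_decomposition by metis

lemma layer_outside: "i = 0 \<or> s < i \<Longrightarrow> pr i x = 0"
  using layer_in_V[of i x] V_trivial[of i] by auto

lemma linear_layer: "linear (pr i)"
proof (rule linearI)
  show "pr i (x + y) = pr i x + pr i y" for x y
  proof (rule layer_unique[where v = "\<lambda>k. pr k x + pr k y"])
    show "\<forall>k. pr k x + pr k y \<in> V k" using layer_in_V subspace_add[OF subspace_V] by blast
    show "x + y = (\<Sum>k=1..s. pr k x + pr k y)" by (simp only: sum.distrib sum_layers)
  qed
  show "pr i (c *\<^sub>R x) = c *\<^sub>R pr i x" for c x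
  proof (rule layer_unique[where v = "\<lambda>k. c *\<^sub>R pr k x"])
    show "\<forall>k. c *\<^sub>R pr k x \<in> V k" using layer_in_V subspace_scale[OF subspace_V] by blast
    show "c *\<^sub>R x = (\<Sum>k=1..s. c *\<^sub>R pr k x)" by (simp only: scaleR_right.sum[symmetric] sum_layers)
  qed
qed

lemma bounded_linear_layer: "bounded_linear (pr i)"
  using linear_layer linear_conv_bounded_linear by blast

lemmas layer_add = linear_add[OF linear_layer]
lemmas layer_diff = linear_diff[OF linear_layer]
lemmas layer_scale = linear_scale[OF linear_layer]
lemmas layer_sum = linear_sum[OF linear_layer]
lemmas layer_zero [simp] = linear_0[OF linear_layer]

lemma layer_V: assumes "v \<in> V k" shows "pr i v = (if i = k then v else 0)"
proof (rule layer_unique)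
  show "\<forall>j. (if j = k then v else 0) \<in> V j"
    using assms subspace_0[OF subspace_V] by auto
  show "v = (\<Sum>j=1..s. if j = k then v else 0)"
    using assms V_trivial[of k] by (cases "k \<in> {1..s}") auto
qed

lemma layer_layer: "pr i (pr k x) = (if i = k then pr k x else 0)"
  using layer_V[OF layer_in_V] by simp

lemma layers_eqI: "(\<And>k. k \<in> {1..s} \<Longrightarrow> pr k x = pr k y) \<Longrightarrow> x = y"
  by (metis sum_layers sum.cong)

lemma sum_layers_from_2: "x = pr 1 x + (\<Sum>k=2..s. pr k x)"
  using sum.atLeast_Suc_atMost[OF step_ge_1, of "\<lambda>k. pr k x"] sum_layers[of x]
  by (simp add: numeral_2_eq_2)

definition filtration :: "nat \<Rightarrow> 'a set" where
  "filtration a = {x. \<forall>j<a. pr j x = 0}"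

lemma subspace_filtration: "subspace (filtration a)"
  unfolding subspace_def filtration_def by (auto simp: layer_add layer_scale)

lemmas filtration_0 = subspace_0[OF subspace_filtration]
lemmas filtration_add = subspace_add[OF subspace_filtration]
lemmas filtration_neg = subspace_neg[OF subspace_filtration]
lemmas filtration_scale = subspace_scale[OF subspace_filtration]
lemmas filtration_sum = subspace_sum[OF subspace_filtration]

lemma filtration_antimono: "a \<le> b \<Longrightarrow> filtration b \<subseteq> filtration a"
  unfolding filtration_def by auto

lemma filtration_le_1: "a \<le> 1 \<Longrightarrow> filtration a = UNIV"
  unfolding filtration_def using layer_outside by auto

lemma filtration_above_step: assumes "s < a" shows "filtration a = {0}"
proof -
  have "x = 0" if "x \<in> filtration a" for x
    by (rule layers_eqI) (use that assms in \<open>simp add: filtration_def\<close>)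
  then show ?thesis using filtration_0 by blast
qed

lemma V_filtration: "v \<in> V k \<Longrightarrow> a \<le> k \<Longrightarrow> v \<in> filtration a"
  unfolding filtration_def using layer_V by simp

lemma layer_filtration: "x \<in> filtration a \<Longrightarrow> j < a \<Longrightarrow> pr j x = 0"
  unfolding filtration_def by auto

lemma filtration_Suc: "x \<in> filtration (Suc j) \<longleftrightarrow> x \<in> filtration j \<and> pr j x = 0"
  unfolding filtration_def using less_Suc_eq by auto

lemma br_filtration:
  assumes "x \<in> filtration a" "y \<in> filtration b"
  shows "br x y \<in> filtration (a + b)"
proof -
  have "br x y = (\<Sum>(i,j)\<in>{1..s}\<times>{1..s}. br (pr i x) (pr j y))"
    using bilinear_sum[OF bilinear_br, of "\<lambda>k. pr k x" "{1..s}" "\<lambda>k. pr k y" "{1..s}"]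
      sum_layers[of x] sum_layers[of y] by simp
  also have "\<dots> \<in> filtration (a + b)"
  proof (rule filtration_sum, clarify)
    fix i j
    show "br (pr i x) (pr j y) \<in> filtration (a + b)"
    proof (cases "i < a \<or> j < b")
      case True
      then have "pr i x = 0 \<or> pr j y = 0" using assms layer_filtration by blast
      then show ?thesis
        using bilinear_lzero[OF bilinear_br] bilinear_rzero[OF bilinear_br] filtration_0 by auto
    next
      case False
      then show ?thesis by (intro V_filtration[OF br_V[OF layer_in_V layer_in_V]]) simp
    qed
  qed
  finally show ?thesis .
qed

lemma ad_power_filtration: "e \<in> filtration a \<Longrightarrow> (br X ^^ k) e \<in> filtration (a + k)"
  by (induction k) (use br_filtration[of X 1] filtration_le_1 in auto)

end

section \<open>The BCH product\<close>

definition dynkin_degree :: "(nat \<times> nat) list \<Rightarrow> nat" where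
  "dynkin_degree rs = sum_list (map (\<lambda>p. fst p + snd p) rs)"

lemma dynkin_degree_simps [simp]:
  "dynkin_degree [] = 0" "dynkin_degree (p # rs) = fst p + snd p + dynkin_degree rs"
  by (auto simp: dynkin_degree_def)

lemma dynkin_degree_append: "dynkin_degree (rs @ qs) = dynkin_degree rs + dynkin_degree qs"
  by (simp add: dynkin_degree_def)

lemma dynkin_word_simps [simp]:
  "dynkin_word x y [] = []"
  "dynkin_word x y (p # rs) = replicate (fst p) x @ replicate (snd p) y @ dynkin_word x y rs"
  by (auto simp: dynkin_word_def split: prod.splits)

lemma dynkin_word_append: "dynkin_word x y (rs @ qs) = dynkin_word x y rs @ dynkin_word x y qs"
  by (simp add: dynkin_word_def)

lemma length_dynkin_word: "length (dynkin_word x y rs) = dynkin_degree rs"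
  by (induction rs) auto

lemma map_dynkin_word: "map f (dynkin_word x y rs) = dynkin_word (f x) (f y) rs"
  by (induction rs) auto

lemma set_dynkin_word: "set (dynkin_word x y rs) \<subseteq> {x, y}"
  by (induction rs) auto

lemma list_all2_dynkin_word:
  assumes "P x x'" "P y y'"
  shows "list_all2 P (dynkin_word x y rs) (dynkin_word x' y' rs)"
proof -
  have "list_all2 P (replicate n a) (replicate n b)" if "P a b" for n a b
    using that by (induction n) auto
  then show ?thesis
    using assms by (induction rs) (auto intro!: list_all2_appendI)
qed

lemma length_le_dynkin_degree: "\<forall>p\<in>set rs. 0 < fst p + snd p \<Longrightarrow> length rs \<le> dynkin_degree rs"
  by (induction rs) auto

lemma block_le_dynkin_degree: "p \<in> set rs \<Longrightarrow> fst p + snd p \<le> dynkin_degree rs"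
  by (induction rs) auto

lemma dynkin_tuples_altdef:
  "dynkin_tuples s n = {rs. length rs = n \<and> (\<forall>p\<in>set rs. 0 < fst p + snd p) \<and> dynkin_degree rs \<le> s}"
  by (simp add: dynkin_tuples_def dynkin_degree_def)

lemma finite_dynkin_tuples: "finite (dynkin_tuples s n)"
proof (rule finite_subset)
  show "dynkin_tuples s n \<subseteq> {rs. set rs \<subseteq> {0..s} \<times> {0..s} \<and> length rs = n}"
    unfolding dynkin_tuples_altdef using block_le_dynkin_degree by fastforce
qed (simp add: finite_lists_length_eq)

abbreviation log_coeff :: "nat \<Rightarrow> real" where
  "log_coeff n \<equiv> (-1) ^ (n - 1) / real n"

lemma dynkin_sum_words_of_length_1:
  fixes H :: "'b list \<Rightarrow> 'a::real_vector"
  assumes "1 \<le> s" and H: "\<And>l. length l \<noteq> 1 \<Longrightarrow> H l = 0"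
  shows "(\<Sum>n=1..s. log_coeff n *\<^sub>R (\<Sum>rs\<in>dynkin_tuples s n. dynkin_coeff rs *\<^sub>R H (dynkin_word x y rs)))
         = H [x] + H [y]"
proof -
  have long: "(\<Sum>rs\<in>dynkin_tuples s n. dynkin_coeff rs *\<^sub>R H (dynkin_word x y rs)) = 0" if "2 \<le> n" for n
  proof (rule sum.neutral, clarify)
    fix rs assume "rs \<in> dynkin_tuples s n"
    then have "length (dynkin_word x y rs) \<noteq> 1"
      using length_le_dynkin_degree[of rs] that by (auto simp: dynkin_tuples_altdef length_dynkin_word)
    then show "dynkin_coeff rs *\<^sub>R H (dynkin_word x y rs) = 0" using H by simp
  qed
  have one: "(\<Sum>rs\<in>dynkin_tuples s 1. dynkin_coeff rs *\<^sub>R H (dynkin_word x y rs))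
      = (\<Sum>rs\<in>{[(1,0)], [(0,1)]}. dynkin_coeff rs *\<^sub>R H (dynkin_word x y rs))"
  proof (rule sum.mono_neutral_right[OF finite_dynkin_tuples])
    show "{[(1, 0)], [(0, 1)]} \<subseteq> dynkin_tuples s 1" using assms(1) unfolding dynkin_tuples_altdef by auto
    show "\<forall>rs\<in>dynkin_tuples s 1 - {[(1, 0)], [(0, 1)]}. dynkin_coeff rs *\<^sub>R H (dynkin_word x y rs) = 0"
    proof
      fix rs assume rs: "rs \<in> dynkin_tuples s 1 - {[(1, 0)], [(0, 1)]}"
      then obtain r t where rt: "rs = [(r,t)]"
        unfolding dynkin_tuples_altdef by (auto simp: length_Suc_conv)
      then have "r + t \<noteq> 1" using rs by auto
      with rt show "dynkin_coeff rs *\<^sub>R H (dynkin_word x y rs) = 0" using H by (simp add: length_dynkin_word)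
    qed
  qed
  have "(\<Sum>n=1..s. log_coeff n *\<^sub>R (\<Sum>rs\<in>dynkin_tuples s n. dynkin_coeff rs *\<^sub>R H (dynkin_word x y rs)))
      = log_coeff 1 *\<^sub>R (\<Sum>rs\<in>dynkin_tuples s 1. dynkin_coeff rs *\<^sub>R H (dynkin_word x y rs))
        + (\<Sum>n=Suc 1..s. log_coeff n *\<^sub>R (\<Sum>rs\<in>dynkin_tuples s n. dynkin_coeff rs *\<^sub>R H (dynkin_word x y rs)))"
    by (rule sum.atLeast_Suc_atMost[OF assms(1)])
  also have "(\<Sum>n=Suc 1..s. log_coeff n *\<^sub>R (\<Sum>rs\<in>dynkin_tuples s n. dynkin_coeff rs *\<^sub>R H (dynkin_word x y rs))) = 0"
    by (rule sum.neutral) (simp add: long)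
  finally show ?thesis using one by (simp add: dynkin_coeff_def)
qed

definition nbr_nonlinear :: "('a::zero \<Rightarrow> 'a \<Rightarrow> 'a) \<Rightarrow> 'a list \<Rightarrow> 'a" where
  "nbr_nonlinear br l = (if length l = 1 then 0 else nbr br l)"

context graded_group
begin

lemma nbr_zero_letter: "(\<forall>w\<in>set l. w = 0) \<Longrightarrow> nbr br l = 0"
  by (induction l rule: induct_list012) (auto simp: bilinear_lzero[OF bilinear_br])

lemma nbr_collinear: "2 \<le> length l \<Longrightarrow> \<forall>w\<in>set l. \<exists>c. w = c *\<^sub>R v \<Longrightarrow> nbr br l = 0"
proof (induction l rule: induct_list012)
  case (3 a b zs)
  show ?case
  proof (cases "zs = []")
    case True
    then obtain c d where "a = c *\<^sub>R v" "b = d *\<^sub>R v" using "3.prems" by auto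
    then show ?thesis
      using True by (simp add: bilinear_lmul[OF bilinear_br] bilinear_rmul[OF bilinear_br] br_self)
  next
    case False
    then have "nbr br (b # zs) = 0" using "3.IH"(2) "3.prems" by (cases zs) auto
    then show ?thesis by (simp add: bilinear_rzero[OF bilinear_br])
  qed
qed auto

lemma nbr_diff_filtration:
  "list_all2 (\<lambda>a b. a - b \<in> filtration j) l l' \<Longrightarrow> 2 \<le> length l \<Longrightarrow>
   nbr br l - nbr br l' \<in> filtration (Suc j)"
proof (induction l arbitrary: l' rule: induct_list012)
  case (3 a b zs)
  then obtain a' b' zs' where l': "l' = a' # b' # zs'" and a: "a - a' \<in> filtration j"
    and b: "b - b' \<in> filtration j" and zs: "list_all2 (\<lambda>a b. a - b \<in> filtration j) zs zs'"
    by (auto simp: list_all2_Cons1)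
  define A where "A = nbr br (b # zs)"
  define A' where "A' = nbr br (b' # zs')"
  have "nbr br (a # b # zs) - nbr br l' = br (a - a') A + br a' (A - A')"
    unfolding l' A_def A'_def by (simp add: bilinear_lsub[OF bilinear_br] bilinear_rsub[OF bilinear_br])
  moreover have "br (a - a') A \<in> filtration (Suc j)"
    using br_filtration[OF a, of A 1] filtration_le_1 by simp
  moreover have "A - A' \<in> filtration j"
  proof (cases "zs = []")
    case True
    then show ?thesis using zs b by (simp add: A_def A'_def)
  next
    case False
    then have "A - A' \<in> filtration (Suc j)"
      unfolding A_def A'_def using "3.IH"(2)[of "b' # zs'"] zs b by (cases zs) auto
    then show ?thesis using filtration_antimono[of j "Suc j"] by auto
  qed
  then have "br a' (A - A') \<in> filtration (Suc j)"
    using br_filtration[of a' 1 "A - A'" j] filtration_le_1 by simp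
  ultimately show ?case using filtration_add by simp
qed auto

definition bch_rem :: "'a \<Rightarrow> 'a \<Rightarrow> 'a" where
  "bch_rem x y = (\<Sum>n=1..s. log_coeff n *\<^sub>R
     (\<Sum>rs\<in>dynkin_tuples s n. dynkin_coeff rs *\<^sub>R nbr_nonlinear br (dynkin_word x y rs)))"

lemma bch_eq: "bch br s x y = x + y + bch_rem x y"
proof -
  define H where "H l = (if length l = 1 then nbr br l else 0)" for l :: "'a list"
  have "nbr br l = nbr_nonlinear br l + H l" for l by (simp add: H_def nbr_nonlinear_def)
  then have "bch br s x y = bch_rem x y +
     (\<Sum>n=1..s. log_coeff n *\<^sub>R (\<Sum>rs\<in>dynkin_tuples s n. dynkin_coeff rs *\<^sub>R H (dynkin_word x y rs)))"
    unfolding bch_def bch_rem_def by (simp add: scaleR_right_distrib sum.distrib)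
  also have "\<dots> = bch_rem x y + x + y"
    by (subst dynkin_sum_words_of_length_1[OF step_ge_1]) (simp_all add: H_def)
  finally show ?thesis by (simp add: add_ac)
qed

lemma bch_rem_diff_filtration:
  assumes "x - x' \<in> filtration j" "y - y' \<in> filtration j"
  shows "bch_rem x y - bch_rem x' y' \<in> filtration (Suc j)"
  unfolding bch_rem_def
  unfolding scaleR_right.sum[symmetric] scaleR_diff_right[symmetric] sum_subtractf[symmetric]
proof (intro filtration_sum filtration_scale)
  fix rs
  have words: "list_all2 (\<lambda>a b. a - b \<in> filtration j) (dynkin_word x y rs) (dynkin_word x' y' rs)"
    by (rule list_all2_dynkin_word) (use assms in auto)
  then have "length (dynkin_word x' y' rs) = length (dynkin_word x y rs)"
    using list_all2_lengthD by metis
  then show "nbr_nonlinear br (dynkin_word x y rs) - nbr_nonlinear br (dynkin_word x' y' rs) \<in> filtration (Suc j)"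
    using nbr_diff_filtration[OF words] filtration_0
    by (cases "length (dynkin_word x y rs) \<le> 1") (auto simp: nbr_nonlinear_def le_Suc_eq)
qed

lemma bch_rem_collinear: "bch_rem (a *\<^sub>R v) (b *\<^sub>R v) = 0"
proof -
  have "nbr_nonlinear br l = 0" if "\<forall>w\<in>set l. \<exists>c. w = c *\<^sub>R v" for l
  proof (cases "2 \<le> length l")
    case True
    then show ?thesis using nbr_collinear[OF True that] by (simp add: nbr_nonlinear_def)
  next
    case False
    then have "length l = 0 \<or> length l = 1" by linarith
    then show ?thesis by (auto simp: nbr_nonlinear_def)
  qed
  moreover have "\<forall>w\<in>set (dynkin_word (a *\<^sub>R v) (b *\<^sub>R v) rs). \<exists>c. w = c *\<^sub>R v" for rs
    using set_dynkin_word[of "a *\<^sub>R v" "b *\<^sub>R v" rs] by blast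
  ultimately show ?thesis unfolding bch_rem_def by simp
qed

lemma bch_collinear: "bch br s (a *\<^sub>R v) (b *\<^sub>R v) = (a + b) *\<^sub>R v"
  by (simp add: bch_eq bch_rem_collinear scaleR_add_left)

lemma bch_0_right [simp]: "bch br s x 0 = x"
  using bch_collinear[of 1 x 0] by simp

lemma bch_0_left [simp]: "bch br s 0 y = y"
  using bch_collinear[of 0 y 1] by simp

lemma bch_neg_left [simp]: "bch br s (- x) x = 0"
  using bch_collinear[of "-1" x 1] by simp

lemma bch_rem_0_right: "bch_rem x 0 = 0"
  using bch_eq[of x 0] by simp

lemma bch_rem_filtration: "x \<in> filtration a \<Longrightarrow> y \<in> filtration a \<Longrightarrow> bch_rem x y \<in> filtration (Suc a)"
  using bch_rem_diff_filtration[of x 0 a y 0] bch_rem_0_right by simp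

lemma layer_bch: "pr j (bch br s x y) = pr j x + pr j y + pr j (bch_rem x y)"
  by (simp add: bch_eq layer_add)

lemma layer_1_bch: "pr 1 (bch br s x y) = pr 1 x + pr 1 y"
  using layer_filtration[OF bch_rem_filtration, of x 1 y 1] filtration_le_1 by (simp add: layer_bch)

lemma layer_bch_rem_eq:
  "x - x' \<in> filtration j \<Longrightarrow> y - y' \<in> filtration j \<Longrightarrow> pr j (bch_rem x y) = pr j (bch_rem x' y')"
  using bch_rem_diff_filtration filtration_Suc by (simp add: layer_diff)

lemma bch_filtration:
  assumes "x \<in> filtration a" "y \<in> filtration a"
  shows "bch br s x y \<in> filtration a" "pr a (bch br s x y) = pr a x + pr a y"
  using bch_rem_filtration[OF assms] assms filtration_Suc
  by (simp_all add: bch_eq layer_add filtration_add)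

lemma bch_left_cancel: assumes "bch br s u y = bch br s u y'" shows "y = y'"
proof -
  have "y - y' \<in> filtration j" for j
  proof (induction j)
    case 0 then show ?case by (simp add: filtration_le_1)
  next
    case (Suc j)
    have "pr j (bch_rem u y) = pr j (bch_rem u y')"
      by (rule layer_bch_rem_eq) (use Suc filtration_0 in auto)
    then have "pr j y = pr j y'" using arg_cong[OF assms, of "pr j"] by (simp add: layer_bch)
    then show ?case using Suc filtration_Suc by (simp add: layer_diff)
  qed
  then show ?thesis using filtration_above_step[of "Suc s"] by (metis lessI right_minus_eq singletonD)
qed

text \<open>Associativity of the BCH product is not available, so the left quotient \<open>p\<inverse> h\<close>,
  the solution \<open>y\<close> of \<open>p y = h\<close>, is constructed one layer at a time.\<close>

fun ldiv_upto :: "nat \<Rightarrow> 'a \<Rightarrow> 'a \<Rightarrow> 'a" where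
  "ldiv_upto 0 p h = 0"
| "ldiv_upto (Suc j) p h = ldiv_upto j p h + pr (Suc j) (h - bch br s p (ldiv_upto j p h))"

lemma layer_bch_ldiv_upto: "i \<le> j \<Longrightarrow> pr i (bch br s p (ldiv_upto j p h)) = pr i h"
proof (induction j arbitrary: i)
  case 0 then show ?case by (simp add: layer_outside)
next
  case (Suc j)
  define c where "c = ldiv_upto j p h"
  define \<delta> where "\<delta> = pr (Suc j) (h - bch br s p c)"
  have \<delta>V: "\<delta> \<in> V (Suc j)" unfolding \<delta>_def by (rule layer_in_V)
  have "pr i (bch_rem p (c + \<delta>)) = pr i (bch_rem p c)"
    by (rule layer_bch_rem_eq) (use V_filtration[OF \<delta>V] Suc.prems filtration_0 in auto)
  then have "pr i (bch br s p (c + \<delta>)) = pr i (bch br s p c) + pr i \<delta>"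
    by (simp add: layer_bch layer_add)
  also have "\<dots> = pr i h"
  proof (cases "i \<le> j")
    case True
    then show ?thesis using Suc.IH layer_V[OF \<delta>V, of i] by (simp add: c_def)
  next
    case False
    then have "i = Suc j" using Suc.prems by simp
    then show ?thesis using layer_V[OF \<delta>V, of i] by (simp add: \<delta>_def layer_diff)
  qed
  finally show ?case by (simp add: c_def \<delta>_def)
qed

definition ldiv :: "'a \<Rightarrow> 'a \<Rightarrow> 'a" where
  "ldiv p h = ldiv_upto s p h"

lemma bch_ldiv: "bch br s p (ldiv p h) = h"
  unfolding ldiv_def by (rule layers_eqI) (simp add: layer_bch_ldiv_upto)

lemma ldiv_unique: "bch br s p y = h \<Longrightarrow> y = ldiv p h"
  by (metis bch_left_cancel bch_ldiv)

lemma ldiv_filtration: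
  assumes "p \<in> filtration a" "h \<in> filtration a" "pr a p = pr a h"
  shows "ldiv p h \<in> filtration (Suc a)"
proof -
  define c where "c = ldiv p h"
  have pc: "bch br s p c = h" unfolding c_def by (rule bch_ldiv)
  have "c \<in> filtration i" if "i \<le> Suc a" for i
    using that
  proof (induction i)
    case 0 then show ?case by (simp add: filtration_le_1)
  next
    case (Suc i)
    then have c: "c \<in> filtration i" by simp
    have "pr i (bch_rem p c) = pr i (bch_rem p 0)"
      by (rule layer_bch_rem_eq) (use c filtration_0 in auto)
    then have "pr i p + pr i c = pr i h"
      using arg_cong[OF pc, of "pr i"] by (simp add: layer_bch bch_rem_0_right)
    moreover have "pr i p = pr i h"
      using assms Suc.prems layer_filtration by (cases "i < a") auto
    ultimately show ?case using c filtration_Suc by auto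
  qed
  then show ?thesis unfolding c_def by simp
qed

end

section \<open>Differentiability of the BCH product\<close>

text \<open>\<open>nbr_deriv br [(a\<^sub>1, e\<^sub>1), \<dots>, (a\<^sub>m, e\<^sub>m)]\<close> is the derivative of the nested bracket
  \<open>[a\<^sub>1, [a\<^sub>2, \<dots> a\<^sub>m]]\<close> at \<open>(a\<^sub>1, \<dots>, a\<^sub>m)\<close> in the direction \<open>(e\<^sub>1, \<dots>, e\<^sub>m)\<close>.\<close>

fun nbr_deriv :: "('a::monoid_add \<Rightarrow> 'a \<Rightarrow> 'a) \<Rightarrow> ('a \<times> 'a) list \<Rightarrow> 'a" where
  "nbr_deriv br [] = 0"
| "nbr_deriv br [p] = snd p"
| "nbr_deriv br (p # q # l) =
     br (snd p) (nbr br (fst q # map fst l)) + br (fst p) (nbr_deriv br (q # l))"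

context graded_group
begin

lemma has_derivative_nbr:
  fixes L :: "(('x::real_normed_vector \<Rightarrow> 'a) \<times> ('x \<Rightarrow> 'a)) list"
  assumes "\<forall>p\<in>set L. (fst p has_derivative snd p) (at z)"
  shows "((\<lambda>y. nbr br (map (\<lambda>p. fst p y) L)) has_derivative
          (\<lambda>e. nbr_deriv br (map (\<lambda>p. (fst p z, snd p e)) L))) (at z)"
  using assms
proof (induction L rule: induct_list012)
  case (3 p q l)
  have "((\<lambda>y. br (fst p y) (nbr br (map (\<lambda>p. fst p y) (q # l)))) has_derivative
     (\<lambda>e. br (fst p z) (nbr_deriv br (map (\<lambda>p. (fst p z, snd p e)) (q # l))) +
          br (snd p e) (nbr br (map (\<lambda>p. fst p z) (q # l))))) (at z)"
    using "3.IH"(2) "3.prems" by (intro bounded_bilinear.FDERIV[OF bounded_bilinear_br]) simp_all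
  then show ?case by (simp add: o_def add.commute)
qed simp_all

lemma nbr_deriv_zero_points:
  "\<forall>p\<in>set l. fst p = 0 \<Longrightarrow> nbr_deriv br l = (if length l = 1 then snd (hd l) else 0)"
proof (induction l rule: induct_list012)
  case (3 p q l)
  have "nbr_deriv br (q # l) = 0 \<or> length (q # l) = 1" using 3 by auto
  then show ?case using "3.prems" nbr_zero_letter[of "fst q # map fst l"]
    by (auto simp: bilinear_lzero[OF bilinear_br] bilinear_rzero[OF bilinear_br])
qed auto

lemma has_derivative_bch:
  "((\<lambda>q. bch br s (fst q) (snd q)) has_derivative
    (\<lambda>e. \<Sum>n=1..s. log_coeff n *\<^sub>R (\<Sum>rs\<in>dynkin_tuples s n. dynkin_coeff rs *\<^sub>R
        nbr_deriv br (dynkin_word (a, fst e) (b, snd e) rs)))) (at (a, b))"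
proof -
  have "((\<lambda>q. nbr br (dynkin_word (fst q) (snd q) rs)) has_derivative
       (\<lambda>e. nbr_deriv br (dynkin_word (a, fst e) (b, snd e) rs))) (at (a, b))" for rs
  proof -
    have "(fst has_derivative fst) (at (a, b))" "(snd has_derivative snd) (at (a, b))"
      by (auto intro!: bounded_linear_imp_has_derivative bounded_linear_fst bounded_linear_snd)
    then have "\<forall>p\<in>set (dynkin_word (fst, fst) (snd, snd) rs). (fst p has_derivative snd p) (at (a, b))"
      using set_dynkin_word[of "(fst :: 'a \<times> 'a \<Rightarrow> 'a, fst :: 'a \<times> 'a \<Rightarrow> 'a)" "(snd, snd)" rs] by auto
    from has_derivative_nbr[OF this] show ?thesis by (simp add: map_dynkin_word)
  qed
  then show ?thesis unfolding bch_def
    by (intro has_derivative_sum has_derivative_scaleR_right)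
qed

lemma has_derivative_bch_0:
  "((\<lambda>q. bch br s (fst q) (snd q)) has_derivative (\<lambda>e. fst e + snd e)) (at (0, 0))"
proof -
  define H where "H l = nbr_deriv br (map (\<lambda>w. (0::'a, w)) l)" for l
  have "nbr_deriv br (dynkin_word (0, fst e) (0, snd e) rs) = H (dynkin_word (fst e) (snd e) rs)" for e rs
    by (simp add: H_def map_dynkin_word)
  moreover have "(\<Sum>n=1..s. log_coeff n *\<^sub>R
      (\<Sum>rs\<in>dynkin_tuples s n. dynkin_coeff rs *\<^sub>R H (dynkin_word (fst e) (snd e) rs)))
       = fst e + snd e" for e
    by (subst dynkin_sum_words_of_length_1[OF step_ge_1]) (simp_all add: H_def nbr_deriv_zero_points)
  ultimately show ?thesis using has_derivative_bch[of 0 0] by simp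
qed

lemma tendsto_bch [tendsto_intros]:
  "(f \<longlongrightarrow> a) F \<Longrightarrow> (g \<longlongrightarrow> b) F \<Longrightarrow> ((\<lambda>x. bch br s (f x) (g x)) \<longlongrightarrow> bch br s a b) F"
  using isCont_tendsto_compose[OF has_derivative_continuous[OF has_derivative_bch] tendsto_Pair]
  by fastforce

lemma continuous_on_bch [continuous_intros]:
  "continuous_on S f \<Longrightarrow> continuous_on S g \<Longrightarrow> continuous_on S (\<lambda>x. bch br s (f x) (g x))"
  unfolding continuous_on_def by (auto intro: tendsto_bch)

lemma tendsto_ldiv [tendsto_intros]:
  assumes "(f \<longlongrightarrow> a) F" "(g \<longlongrightarrow> b) F"
  shows "((\<lambda>x. ldiv (f x) (g x)) \<longlongrightarrow> ldiv a b) F"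
proof -
  have "((\<lambda>x. ldiv_upto j (f x) (g x)) \<longlongrightarrow> ldiv_upto j a b) F" for j
    by (induction j) (auto intro!: tendsto_intros assms bounded_linear.tendsto[OF bounded_linear_layer])
  then show ?thesis unfolding ldiv_def .
qed

lemma continuous_on_ldiv [continuous_intros]:
  "continuous_on S f \<Longrightarrow> continuous_on S g \<Longrightarrow> continuous_on S (\<lambda>x. ldiv (f x) (g x))"
  unfolding continuous_on_def by (auto intro: tendsto_ldiv)

lemma tendsto_bch_cancel_left:
  assumes "(u \<longlongrightarrow> a) F" "((\<lambda>x. bch br s (u x) (w x)) \<longlongrightarrow> bch br s a b) F"
  shows "(w \<longlongrightarrow> b) F"
proof -
  have "w = (\<lambda>x. ldiv (u x) (bch br s (u x) (w x)))" by (rule ext, rule ldiv_unique) (rule refl)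
  moreover have "((\<lambda>x. ldiv (u x) (bch br s (u x) (w x))) \<longlongrightarrow> ldiv a (bch br s a b)) F"
    by (intro tendsto_intros assms)
  ultimately show ?thesis using ldiv_unique[of a b] by simp
qed

end

text \<open>Dynkin words in the letters \<open>-X\<close> and \<open>X + Y\<close> are encoded by boolean lists, \<open>True\<close>
  standing for \<open>X + Y\<close>.  The derivative in \<open>Y\<close> of such a nested bracket at \<open>Y = 0\<close> is
  \<open>ad_coeff\<close> times a power of \<open>ad X\<close>, and it vanishes unless one of the last two letters is
  \<open>X + Y\<close>.\<close>

definition bool_sign :: "bool \<Rightarrow> real" where
  "bool_sign b = (if b then 1 else -1)"

fun ad_coeff :: "bool list \<Rightarrow> real" where
  "ad_coeff [] = 0"
| "ad_coeff [b] = (if b then 1 else 0)"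
| "ad_coeff (b # c # l) = (if b \<and> l = [] then - bool_sign c else 0) + bool_sign b * ad_coeff (c # l)"

abbreviation letters :: "(nat \<times> nat) list \<Rightarrow> bool list" where
  "letters rs \<equiv> dynkin_word False True rs"

context graded_group
begin

lemma nbr_plus_minus:
  "nbr br (map (\<lambda>b. if b then X else - X) bs) = (if length bs = 1 then bool_sign (hd bs) *\<^sub>R X else 0)"
proof (cases "2 \<le> length bs")
  case True
  have "\<forall>w\<in>set (map (\<lambda>b. if b then X else - X) bs). \<exists>c. w = c *\<^sub>R X"
    by (auto intro: exI[of _ 1] exI[of _ "-1"])
  then show ?thesis using True nbr_collinear[of _ X] by simp
next
  case False
  then have "length bs = 0 \<or> length bs = 1" by linarith
  then show ?thesis by (auto simp: bool_sign_def length_Suc_conv)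
qed

lemma nbr_deriv_ad_coeff:
  "nbr_deriv br (map (\<lambda>b. if b then (X, e) else (- X, 0)) bs) = ad_coeff bs *\<^sub>R (br X ^^ (length bs - 1)) e"
proof (induction bs rule: induct_list012)
  case (3 b c l)
  define f where "f = (\<lambda>b. if b then (X, e) else (- X, 0))"
  have letters: "fst (f c) # map fst (map f l) = map (\<lambda>b. if b then X else - X) (c # l)"
    by (induction l) (auto simp: f_def)
  have tail: "nbr br (fst (f c) # map fst (map f l)) = (if l = [] then bool_sign c *\<^sub>R X else 0)"
    unfolding letters using nbr_plus_minus[where bs = "c # l"] by auto
  have unfold: "nbr_deriv br (map f (b # c # l)) = br (snd (f b)) (nbr br (fst (f c) # map fst (map f l)))
     + br (fst (f b)) (nbr_deriv br (map f (c # l)))" by simp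
  have head: "br (snd (f b)) (if l = [] then bool_sign c *\<^sub>R X else 0)
      = (if b \<and> l = [] then - bool_sign c else 0) *\<^sub>R (br X ^^ (length (b # c # l) - 1)) e"
    using br_anticomm[of e X]
    by (auto simp: f_def bilinear_lzero[OF bilinear_br] bilinear_rzero[OF bilinear_br] bilinear_rmul[OF bilinear_br])
  have rest: "br (fst (f b)) (ad_coeff (c # l) *\<^sub>R (br X ^^ (length (c # l) - 1)) e)
      = (bool_sign b * ad_coeff (c # l)) *\<^sub>R (br X ^^ (length (b # c # l) - 1)) e"
    by (auto simp: f_def bool_sign_def bilinear_rmul[OF bilinear_br] bilinear_lneg[OF bilinear_br])
  have "nbr_deriv br (map f (b # c # l)) = ad_coeff (b # c # l) *\<^sub>R (br X ^^ (length (b # c # l) - 1)) e"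
    unfolding unfold tail head "3.IH"(2)[folded f_def] rest by (simp add: scaleR_add_left)
  then show ?case by (simp add: f_def)
qed auto

lemma has_derivative_bch_translate_dynkin:
  "((\<lambda>Y. bch br s (- X) (X + Y)) has_derivative
    (\<lambda>e. \<Sum>n=1..s. log_coeff n *\<^sub>R (\<Sum>rs\<in>dynkin_tuples s n. dynkin_coeff rs *\<^sub>R
        (ad_coeff (letters rs) *\<^sub>R (br X ^^ (dynkin_degree rs - 1)) e)))) (at 0)"
proof -
  have word: "dynkin_word (- X, 0) (X, e) rs = map (\<lambda>b. if b then (X, e) else (- X, 0)) (letters rs)" for e rs
    by (simp add: map_dynkin_word)
  have "((\<lambda>Y. (- X, X + Y)) has_derivative (\<lambda>e. (0, e))) (at 0)"
    by (auto intro!: derivative_eq_intros)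
  from has_derivative_compose[OF this has_derivative_bch[of "- X" "X + 0"]]
  show ?thesis by (simp add: word nbr_deriv_ad_coeff length_dynkin_word)
qed

end

section \<open>A combinatorial identity for Dynkin's coefficients\<close>

definition dynkin_tuples_deg :: "nat \<Rightarrow> nat \<Rightarrow> (nat \<times> nat) list set" where
  "dynkin_tuples_deg n m = {rs. length rs = n \<and> (\<forall>p\<in>set rs. 0 < fst p + snd p) \<and> dynkin_degree rs = m}"

definition dynkin_blocks :: "nat \<Rightarrow> (nat \<times> nat) set" where
  "dynkin_blocks m = {p. 0 < fst p + snd p \<and> fst p + snd p \<le> m}"

definition block_weight :: "nat \<times> nat \<Rightarrow> real" where
  "block_weight p = (-1) ^ fst p / (fact (fst p) * fact (snd p))"

definition tuple_weight :: "(nat \<times> nat) list \<Rightarrow> real" where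
  "tuple_weight rs = prod_list (map block_weight rs)"

lemma finite_dynkin_tuples_deg: "finite (dynkin_tuples_deg n m)"
  by (rule finite_subset[OF _ finite_dynkin_tuples[of m n]])
     (auto simp: dynkin_tuples_deg_def dynkin_tuples_altdef)

lemma finite_dynkin_blocks: "finite (dynkin_blocks m)"
  by (rule finite_subset[of _ "{0..m} \<times> {0..m}"]) (auto simp: dynkin_blocks_def)

lemma dynkin_blocks_0 [simp]: "dynkin_blocks 0 = {}"
  unfolding dynkin_blocks_def by auto

lemma dynkin_tuples_deg_0: "dynkin_tuples_deg 0 m = (if m = 0 then {[]} else {})"
  unfolding dynkin_tuples_deg_def by auto

lemma dynkin_tuples_deg_blocks_pos: "rs \<in> dynkin_tuples_deg n m \<Longrightarrow> \<forall>q\<in>set rs. 0 < fst q + snd q"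
  unfolding dynkin_tuples_deg_def by auto

lemma tuple_weight_snoc: "tuple_weight (pre @ [p]) = tuple_weight pre * block_weight p"
  by (simp add: tuple_weight_def)

lemma sum_dynkin_tuples_deg_Suc:
  "(\<Sum>rs\<in>dynkin_tuples_deg (Suc n) m. f rs) =
   (\<Sum>p\<in>dynkin_blocks m. \<Sum>pre\<in>dynkin_tuples_deg n (m - (fst p + snd p)). f (pre @ [p]))"
proof -
  define S where "S = Sigma (dynkin_blocks m) (\<lambda>p. dynkin_tuples_deg n (m - (fst p + snd p)))"
  define g where "g = (\<lambda>(p::nat \<times> nat, pre). pre @ [p])"
  have "inj_on g S" unfolding g_def inj_on_def by auto
  moreover have "g ` S = dynkin_tuples_deg (Suc n) m"
  proof
    show "g ` S \<subseteq> dynkin_tuples_deg (Suc n) m"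
      unfolding S_def g_def dynkin_tuples_deg_def dynkin_blocks_def by (auto simp: dynkin_degree_append)
    show "dynkin_tuples_deg (Suc n) m \<subseteq> g ` S"
    proof
      fix rs assume rs: "rs \<in> dynkin_tuples_deg (Suc n) m"
      then have "rs \<noteq> []" unfolding dynkin_tuples_deg_def by auto
      then have rs_eq: "rs = butlast rs @ [last rs]" by simp
      moreover have "(last rs, butlast rs) \<in> S"
        using rs unfolding S_def dynkin_tuples_deg_def dynkin_blocks_def
        by (subst (asm) rs_eq) (auto simp: dynkin_degree_append)
      ultimately show "rs \<in> g ` S" unfolding g_def by force
    qed
  qed
  ultimately have "(\<Sum>rs\<in>dynkin_tuples_deg (Suc n) m. f rs) = (\<Sum>(p,pre)\<in>S. f (pre @ [p]))"
    using sum.reindex[of g S f] by (simp add: g_def case_prod_unfold)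
  also have "\<dots> = (\<Sum>p\<in>dynkin_blocks m. \<Sum>pre\<in>dynkin_tuples_deg n (m - (fst p + snd p)). f (pre @ [p]))"
    unfolding S_def by (rule sum.Sigma[symmetric]) (use finite_dynkin_blocks finite_dynkin_tuples_deg in auto)
  finally show ?thesis .
qed

text \<open>This is the binomial theorem for \<open>(1 - 1)\<^sup>k\<close>.\<close>

lemma sum_block_weight_of_degree:
  assumes "1 \<le> k"
  shows "(\<Sum>p\<in>dynkin_blocks m. if fst p + snd p = k then block_weight p else 0) = 0"
proof (cases "k \<le> m")
  case False
  then have "{p\<in>dynkin_blocks m. fst p + snd p = k} = {}" unfolding dynkin_blocks_def by auto
  then show ?thesis by (simp add: sum.inter_filter[OF finite_dynkin_blocks, symmetric])
next
  case True
  have eq: "{p\<in>dynkin_blocks m. fst p + snd p = k} = (\<lambda>r. (r, k - r)) ` {..k}"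
    unfolding dynkin_blocks_def using True assms by force
  have inj: "inj_on (\<lambda>r. (r, k - r)) {..k}" by (auto simp: inj_on_def)
  have "(\<Sum>p\<in>dynkin_blocks m. if fst p + snd p = k then block_weight p else 0)
      = (\<Sum>r\<le>k. block_weight (r, k - r))"
    by (simp add: sum.inter_filter[OF finite_dynkin_blocks, symmetric] eq sum.reindex[OF inj])
  also have "\<dots> = (\<Sum>r\<le>k. (-1) ^ r * of_nat (k choose r)) / fact k"
    unfolding sum_divide_distrib by (intro sum.cong refl) (simp add: block_weight_def binomial_fact)
  also have "\<dots> = 0" using choose_alternating_sum[of k] assms by simp
  finally show ?thesis .
qed

lemma sum_tuple_weight:
  "(\<Sum>rs\<in>dynkin_tuples_deg n k. tuple_weight rs) = (if n = 0 \<and> k = 0 then 1 else 0)"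
proof (induction n arbitrary: k)
  case 0 then show ?case by (simp add: dynkin_tuples_deg_0 tuple_weight_def)
next
  case (Suc n)
  have "(\<Sum>rs\<in>dynkin_tuples_deg (Suc n) k. tuple_weight rs)
      = (\<Sum>p\<in>dynkin_blocks k. if n = 0 \<and> fst p + snd p = k then block_weight p else 0)"
    unfolding sum_dynkin_tuples_deg_Suc tuple_weight_snoc sum_distrib_right[symmetric] Suc.IH
    by (intro sum.cong refl) (auto simp: dynkin_blocks_def)
  also have "\<dots> = 0"
  proof (cases "n = 0 \<and> 1 \<le> k")
    case True
    then show ?thesis using sum_block_weight_of_degree[of k k] by simp
  next
    case False
    then show ?thesis by (auto simp: dynkin_blocks_def intro!: sum.neutral)
  qed
  finally show ?case by simp
qed

fun head_coeff :: "bool list \<Rightarrow> real" where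
  "head_coeff [True] = 1"
| "head_coeff (True # False # l) = 1"
| "head_coeff (False # True # l) = -1"
| "head_coeff l = 0"

lemma head_coeff_snoc: "head_coeff (x # y # zs @ [b]) = head_coeff (x # y # zs)"
  by (cases x; cases y) auto

lemma ad_coeff_eq_head_coeff: "ad_coeff l = (-1) ^ length (filter Not l) * head_coeff (rev l)"
proof (induction l rule: induct_list012)
  case (3 b c l)
  show ?case
  proof (cases "l = []")
    case True
    then show ?thesis by (cases b; cases c) (auto simp: bool_sign_def)
  next
    case False
    then obtain x ys where "rev l = x # ys" by (cases "rev l") auto
    then have "rev (c # l) = x # hd (ys @ [c]) # tl (ys @ [c])" by (cases ys) auto
    moreover have "rev (b # c # l) = rev (c # l) @ [b]" by simp
    ultimately have "head_coeff (rev (b # c # l)) = head_coeff (rev (c # l))"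
      by (metis append_Cons head_coeff_snoc)
    moreover have "ad_coeff (b # c # l) = bool_sign b * ad_coeff (c # l)"
      using False by (cases l) auto
    ultimately show ?thesis using "3.IH"(2) by (cases b) (auto simp: bool_sign_def)
  qed
qed (auto simp: bool_sign_def)

lemma ad_coeff_div_factorials:
  "ad_coeff (letters rs) / prod_list (map (\<lambda>p. fact (fst p) * fact (snd p)) rs)
   = tuple_weight rs * head_coeff (rev (letters rs))"
proof -
  have "length (filter Not (letters rs)) = sum_list (map fst rs)"
    by (induction rs) (auto simp: filter_replicate)
  moreover have "tuple_weight rs = (-1) ^ sum_list (map fst rs) / prod_list (map (\<lambda>p. fact (fst p) * fact (snd p)) rs)"
    by (induction rs) (auto simp: tuple_weight_def block_weight_def power_add)
  ultimately show ?thesis by (simp add: ad_coeff_eq_head_coeff)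
qed

definition ends_with_y :: "(nat \<times> nat) list \<Rightarrow> real" where
  "ends_with_y pre = (if pre \<noteq> [] \<and> snd (last pre) \<noteq> 0 then 1 else 0)"

lemma rev_letters_head:
  assumes "pre \<noteq> []" "\<forall>q\<in>set pre. 0 < fst q + snd q"
  shows "\<exists>tl. rev (letters pre) = (snd (last pre) \<noteq> 0) # tl"
proof -
  obtain pre' r t where pre: "pre = pre' @ [(r, t)]"
    using assms(1) by (metis rev_exhaust surj_pair)
  then have "0 < r + t" using assms(2) by auto
  have rev: "rev (letters pre) = replicate t True @ replicate r False @ rev (letters pre')"
    using pre by (simp add: dynkin_word_append)
  show ?thesis
  proof (cases t)
    case 0
    then obtain r' where "r = Suc r'" using \<open>0 < r + t\<close> by (cases r) auto
    then show ?thesis using rev pre 0 by auto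
  next
    case (Suc t')
    then show ?thesis using rev pre by auto
  qed
qed

lemma head_coeff_letters_snoc:
  assumes "0 < fst p + snd p" "\<forall>q\<in>set pre. 0 < fst q + snd q"
  shows "head_coeff (rev (letters (pre @ [p])))
         = (if snd p = 1 then 1 else 0) - (if p = (1, 0) \<or> p = (0, 1) then ends_with_y pre else 0)"
proof -
  obtain r t where p: "p = (r, t)" by (cases p)
  have rev: "rev (letters (pre @ [p])) = replicate t True @ replicate r False @ rev (letters pre)"
    using p by (simp add: dynkin_word_append)
  have pre: "head_coeff (b # rev (letters pre)) = (if b then 1 else - 1) * (if b then 1 - ends_with_y pre else ends_with_y pre)" for b
  proof (cases "pre = []")
    case False
    then obtain tl where "rev (letters pre) = (snd (last pre) \<noteq> 0) # tl"
      using rev_letters_head assms(2) by blast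
    then show ?thesis using False by (cases b) (auto simp: ends_with_y_def)
  qed (cases b; simp add: ends_with_y_def)
  consider "2 \<le> t" | "t = 1" "1 \<le> r" | "t = 1" "r = 0" | "t = 0" "2 \<le> r" | "t = 0" "r = 1"
    using assms(1) p by fastforce
  then show ?thesis
  proof cases
    case 1
    then obtain t' where "t = Suc (Suc t')" by (metis add_2_eq_Suc le_Suc_ex)
    then show ?thesis using rev p by simp
  next
    case 2
    then obtain r' where "r = Suc r'" by (cases r) auto
    then show ?thesis using rev p 2 by simp
  next
    case 4
    then obtain r' where "r = Suc (Suc r')" by (metis add_2_eq_Suc le_Suc_ex)
    then show ?thesis using rev p 4 by simp
  qed (use rev p pre in auto)
qed

lemma sum_tuple_weight_ends_with_y:
  "(\<Sum>rs\<in>dynkin_tuples_deg n k. tuple_weight rs * ends_with_y rs) = (if n = 1 \<and> 1 \<le> k then - block_weight (k, 0) else 0)"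
proof (cases n)
  case 0 then show ?thesis by (simp add: dynkin_tuples_deg_0 ends_with_y_def)
next
  case (Suc n')
  have "(\<Sum>rs\<in>dynkin_tuples_deg (Suc n') k. tuple_weight rs * ends_with_y rs) =
     (\<Sum>p\<in>dynkin_blocks k. (block_weight p * (if snd p \<noteq> 0 then 1 else 0)) *
        (\<Sum>pre\<in>dynkin_tuples_deg n' (k - (fst p + snd p)). tuple_weight pre))"
    unfolding sum_dynkin_tuples_deg_Suc tuple_weight_snoc sum_distrib_left
    by (intro sum.cong refl) (simp add: ends_with_y_def)
  also have "\<dots> = (\<Sum>p\<in>dynkin_blocks k. if n' = 0 \<and> fst p + snd p = k then block_weight p else 0)
      - (\<Sum>p\<in>dynkin_blocks k. if n' = 0 \<and> p = (k, 0) then block_weight p else 0)"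
    unfolding sum_subtractf[symmetric] sum_tuple_weight
    by (intro sum.cong refl) (auto simp: dynkin_blocks_def)
  also have "\<dots> = (if n' = 0 \<and> 1 \<le> k then - block_weight (k, 0) else 0)"
  proof (cases "n' = 0 \<and> 1 \<le> k")
    case True
    then have "(k, 0) \<in> dynkin_blocks k" by (simp add: dynkin_blocks_def)
    then show ?thesis
      using True sum_block_weight_of_degree[of k k] by (simp add: sum.delta[OF finite_dynkin_blocks])
  next
    case False
    then show ?thesis by (cases "k = 0") auto
  qed
  finally show ?thesis using Suc by simp
qed

definition ad_coeff_sum :: "nat \<Rightarrow> nat \<Rightarrow> real" where
  "ad_coeff_sum n m = (\<Sum>rs\<in>dynkin_tuples_deg n m. tuple_weight rs * head_coeff (rev (letters rs)))"

lemma ad_coeff_sum_Suc: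
  "ad_coeff_sum (Suc n) m = (\<Sum>p\<in>dynkin_blocks m. block_weight p *
     ((if snd p = 1 then 1 else 0) * (\<Sum>pre\<in>dynkin_tuples_deg n (m - (fst p + snd p)). tuple_weight pre)
      - (if p = (1, 0) \<or> p = (0, 1) then 1 else 0) *
          (\<Sum>pre\<in>dynkin_tuples_deg n (m - (fst p + snd p)). tuple_weight pre * ends_with_y pre)))"
  unfolding ad_coeff_sum_def sum_dynkin_tuples_deg_Suc
proof (intro sum.cong refl)
  fix p assume p: "p \<in> dynkin_blocks m"
  let ?A = "if snd p = 1 then 1 else 0::real" and ?B = "if p = (1, 0) \<or> p = (0, 1) then 1 else 0::real"
  let ?T = "dynkin_tuples_deg n (m - (fst p + snd p))"
  have "(\<Sum>pre\<in>?T. tuple_weight (pre @ [p]) * head_coeff (rev (letters (pre @ [p]))))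
      = (\<Sum>pre\<in>?T. block_weight p * (?A * tuple_weight pre - ?B * (tuple_weight pre * ends_with_y pre)))"
  proof (intro sum.cong refl)
    fix pre assume "pre \<in> ?T"
    with p have head: "head_coeff (rev (letters (pre @ [p]))) = ?A - ?B * ends_with_y pre"
      using head_coeff_letters_snoc[OF _ dynkin_tuples_deg_blocks_pos] by (simp add: dynkin_blocks_def)
    show "tuple_weight (pre @ [p]) * head_coeff (rev (letters (pre @ [p])))
        = block_weight p * (?A * tuple_weight pre - ?B * (tuple_weight pre * ends_with_y pre))"
      unfolding tuple_weight_snoc head by (simp add: algebra_simps)
  qed
  also have "\<dots> = block_weight p * (?A * (\<Sum>pre\<in>?T. tuple_weight pre) - ?B * (\<Sum>pre\<in>?T. tuple_weight pre * ends_with_y pre))"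
    by (simp add: sum_subtractf sum_distrib_left right_diff_distrib mult.assoc split del: if_split)
  finally show "(\<Sum>pre\<in>?T. tuple_weight (pre @ [p]) * head_coeff (rev (letters (pre @ [p]))))
      = block_weight p * (?A * (\<Sum>pre\<in>?T. tuple_weight pre) - ?B * (\<Sum>pre\<in>?T. tuple_weight pre * ends_with_y pre))" .
qed

lemma ad_coeff_sum_1:
  assumes "1 \<le> m"
  shows "ad_coeff_sum 1 m = (-1) ^ (m - 1) / fact (m - 1)"
proof -
  have "ad_coeff_sum 1 m = (\<Sum>p\<in>dynkin_blocks m. if p = (m - 1, 1) then (-1) ^ (m - 1) / fact (m - 1) else 0)"
    unfolding One_nat_def ad_coeff_sum_Suc sum_tuple_weight sum_tuple_weight_ends_with_y
    using assms by (intro sum.cong refl) (auto simp: block_weight_def dynkin_blocks_def)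
  also have "\<dots> = (-1) ^ (m - 1) / fact (m - 1)"
  proof -
    have "(m - 1, 1) \<in> dynkin_blocks m" using assms by (simp add: dynkin_blocks_def)
    then show ?thesis by (simp add: sum.delta[OF finite_dynkin_blocks])
  qed
  finally show ?thesis .
qed

lemma ad_coeff_sum_ge_2:
  assumes "2 \<le> n"
  shows "ad_coeff_sum n m = 0"
proof -
  obtain n' where n: "n = Suc n'" "1 \<le> n'" using assms by (cases n) auto
  define c where "c = (if 2 \<le> m then block_weight (m - 1, 0) else 0)"
  have "ad_coeff_sum n m = (\<Sum>p\<in>dynkin_blocks m.
      if n' = 1 then (if p = (1, 0) then - c else 0) + (if p = (0, 1) then c else 0) else 0)"
    unfolding n ad_coeff_sum_Suc sum_tuple_weight sum_tuple_weight_ends_with_y c_def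
    using n by (intro sum.cong refl) (auto simp: dynkin_blocks_def block_weight_def)
  also have "\<dots> = 0"
  proof -
    have "(1, 0) \<in> dynkin_blocks m \<longleftrightarrow> (0, 1) \<in> dynkin_blocks m" by (simp add: dynkin_blocks_def)
    then show ?thesis by (cases "n' = 1") (simp_all add: sum.distrib sum.delta[OF finite_dynkin_blocks])
  qed
  finally show ?thesis .
qed

text \<open>The coefficient of \<open>ad\<^sub>X\<^sup>m\<^sup>-\<^sup>1\<close> in the derivative of \<open>Y \<mapsto> bch (-X) (X + Y)\<close>.\<close>

lemma dynkin_ad_coeff_identity:
  assumes "1 \<le> m" "m \<le> s"
  shows "(\<Sum>n=1..s. log_coeff n * (\<Sum>rs\<in>{rs\<in>dynkin_tuples s n. dynkin_degree rs = m}.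
            dynkin_coeff rs * ad_coeff (letters rs)))
         = (-1) ^ (m - 1) / fact m"
proof -
  have tuples: "{rs\<in>dynkin_tuples s n. dynkin_degree rs = m} = dynkin_tuples_deg n m" for n
    unfolding dynkin_tuples_altdef dynkin_tuples_deg_def using assms by auto
  have inner: "(\<Sum>rs\<in>dynkin_tuples_deg n m. dynkin_coeff rs * ad_coeff (letters rs)) = ad_coeff_sum n m / m" for n
    unfolding ad_coeff_sum_def sum_divide_distrib
  proof (intro sum.cong refl)
    fix rs assume "rs \<in> dynkin_tuples_deg n m"
    then have "dynkin_degree rs = m" unfolding dynkin_tuples_deg_def by auto
    then have "dynkin_coeff rs * ad_coeff (letters rs)
        = (ad_coeff (letters rs) / prod_list (map (\<lambda>p. fact (fst p) * fact (snd p)) rs)) / m"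
      unfolding dynkin_coeff_def by (simp add: dynkin_degree_def)
    then show "dynkin_coeff rs * ad_coeff (letters rs) = tuple_weight rs * head_coeff (rev (letters rs)) / m"
      unfolding ad_coeff_div_factorials .
  qed
  have "(\<Sum>n=1..s. log_coeff n * (\<Sum>rs\<in>{rs\<in>dynkin_tuples s n. dynkin_degree rs = m}.
            dynkin_coeff rs * ad_coeff (letters rs)))
      = (\<Sum>n=1..s. if n = 1 then (-1) ^ (m - 1) / fact (m - 1) / m else 0)"
    unfolding tuples inner
    using assms ad_coeff_sum_1 ad_coeff_sum_ge_2 by (intro sum.cong refl) auto
  also have "\<dots> = (-1) ^ (m - 1) / fact m"
    using assms fact_reduce[of m, where 'a=real] by (simp add: field_simps)
  finally show ?thesis .
qed

section \<open>The differential of the exponential map\<close>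

lemma dynkin_sum_by_degree:
  fixes v :: "nat \<Rightarrow> 'a::real_vector"
  assumes "n \<in> {1..s}"
  shows "(\<Sum>rs\<in>dynkin_tuples s n. c rs *\<^sub>R v (dynkin_degree rs))
         = (\<Sum>m=1..s. (\<Sum>rs\<in>{rs\<in>dynkin_tuples s n. dynkin_degree rs = m}. c rs) *\<^sub>R v m)"
proof -
  have degrees: "dynkin_degree ` dynkin_tuples s n \<subseteq> {1..s}"
    using length_le_dynkin_degree assms by (fastforce simp: dynkin_tuples_altdef)
  have "(\<Sum>rs\<in>dynkin_tuples s n. c rs *\<^sub>R v (dynkin_degree rs))
      = (\<Sum>m=1..s. \<Sum>rs\<in>{rs\<in>dynkin_tuples s n. dynkin_degree rs = m}. c rs *\<^sub>R v (dynkin_degree rs))"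
    by (rule sum.group[symmetric, OF finite_dynkin_tuples _ degrees]) simp
  also have "\<dots> = (\<Sum>m=1..s. (\<Sum>rs\<in>{rs\<in>dynkin_tuples s n. dynkin_degree rs = m}. c rs) *\<^sub>R v m)"
    unfolding scaleR_sum_left by (intro sum.cong refl) auto
  finally show ?thesis .
qed

context graded_group
begin

text \<open>The left-trivialised differential \<open>(1 - e\<^sup>-\<^sup>a\<^sup>d \<^sup>X) / ad X\<close> of the exponential map at \<open>X\<close>,
  truncated by nilpotency.\<close>

definition dexp :: "'a \<Rightarrow> 'a \<Rightarrow> 'a" where
  "dexp X e = (\<Sum>m=1..s. ((-1) ^ (m - 1) / fact m) *\<^sub>R (br X ^^ (m - 1)) e)"

lemma has_derivative_bch_translate: "((\<lambda>Y. bch br s (- X) (X + Y)) has_derivative dexp X) (at 0)"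
proof -
  define v where "v m e = (br X ^^ (m - 1)) e" for m e
  define a where "a n m = (\<Sum>rs\<in>{rs\<in>dynkin_tuples s n. dynkin_degree rs = m}.
      dynkin_coeff rs * ad_coeff (letters rs))" for n m
  have "(\<Sum>n=1..s. log_coeff n *\<^sub>R (\<Sum>rs\<in>dynkin_tuples s n. dynkin_coeff rs *\<^sub>R
        (ad_coeff (letters rs) *\<^sub>R v (dynkin_degree rs) e)))
      = (\<Sum>n=1..s. log_coeff n *\<^sub>R (\<Sum>m=1..s. a n m *\<^sub>R v m e))" for e
  proof (intro sum.cong refl)
    fix n assume n: "n \<in> {1..s}"
    show "log_coeff n *\<^sub>R (\<Sum>rs\<in>dynkin_tuples s n. dynkin_coeff rs *\<^sub>R
        (ad_coeff (letters rs) *\<^sub>R v (dynkin_degree rs) e)) = log_coeff n *\<^sub>R (\<Sum>m=1..s. a n m *\<^sub>R v m e)"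
      using dynkin_sum_by_degree[OF n, of "\<lambda>rs. dynkin_coeff rs * ad_coeff (letters rs)" "\<lambda>m. v m e"]
      unfolding a_def by simp
  qed
  also have "\<dots> e = (\<Sum>m=1..s. (\<Sum>n=1..s. log_coeff n * a n m) *\<^sub>R v m e)" for e
    unfolding scaleR_right.sum scaleR_sum_left scaleR_scaleR by (rule sum.swap)
  also have "\<dots> e = dexp X e" for e
    unfolding dexp_def
  proof (intro sum.cong refl)
    fix m assume "m \<in> {1..s}"
    then have "(\<Sum>n=1..s. log_coeff n * a n m) = (-1) ^ (m - 1) / fact m"
      unfolding a_def by (intro dynkin_ad_coeff_identity) auto
    then show "(\<Sum>n=1..s. log_coeff n * a n m) *\<^sub>R v m e = ((-1) ^ (m - 1) / fact m) *\<^sub>R (br X ^^ (m - 1)) e"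
      by (simp only: v_def)
  qed
  finally show ?thesis
    using has_derivative_bch_translate_dynkin[of X] unfolding v_def by simp
qed

lemma linear_dexp: "linear (dexp X)"
  by (rule linearI) (simp_all add: dexp_def linear_add[OF linear_ad_power] linear_scale[OF linear_ad_power]
      scaleR_add_right sum.distrib scaleR_right.sum mult.commute)

lemma dexp_eq: "dexp X e = e + (\<Sum>m=2..s. ((-1) ^ (m - 1) / fact m) *\<^sub>R (br X ^^ (m - 1)) e)"
  unfolding dexp_def
  using sum.atLeast_Suc_atMost[OF step_ge_1, of "\<lambda>m. ((-1) ^ (m - 1) / fact m) *\<^sub>R (br X ^^ (m - 1)) e"]
  by (simp add: numeral_2_eq_2)

text \<open>\<open>dexp X\<close> is the identity plus a part raising the filtration degree, so it is inverted
  by a finite Neumann series.\<close>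

definition dexp_nil :: "'a \<Rightarrow> 'a \<Rightarrow> 'a" where
  "dexp_nil X e = e - dexp X e"

definition dexp_inv :: "'a \<Rightarrow> 'a \<Rightarrow> 'a" where
  "dexp_inv X e = (\<Sum>k\<le>s. (dexp_nil X ^^ k) e)"

lemma dexp_eq_diff: "dexp X e = e - dexp_nil X e"
  by (simp add: dexp_nil_def)

lemma linear_dexp_nil: "linear (dexp_nil X)"
  unfolding dexp_nil_def by (intro linear_compose_sub linear_ident linear_dexp)

lemma linear_dexp_nil_power: "linear (dexp_nil X ^^ k)"
  by (induction k) (simp_all add: linear_id[unfolded id_def] linear_compose[OF _ linear_dexp_nil, unfolded o_def])

lemma dexp_nil_filtration: assumes "e \<in> filtration a" shows "dexp_nil X e \<in> filtration (Suc a)"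
proof -
  have "(\<Sum>m=2..s. ((-1) ^ (m - 1) / fact m) *\<^sub>R (br X ^^ (m - 1)) e) \<in> filtration (Suc a)"
  proof (intro filtration_sum filtration_scale)
    fix m assume "m \<in> {2..s}"
    then have "Suc a \<le> a + (m - 1)" by auto
    then show "(br X ^^ (m - 1)) e \<in> filtration (Suc a)"
      using ad_power_filtration[OF assms, where X = X and k = "m - 1"] filtration_antimono by blast
  qed
  then show ?thesis unfolding dexp_nil_def dexp_eq by (simp add: filtration_neg)
qed

lemma dexp_nil_power_filtration: "(dexp_nil X ^^ k) e \<in> filtration (Suc k)"
  by (induction k) (auto intro: dexp_nil_filtration simp: filtration_le_1)

lemma dexp_nil_power_vanish: "(dexp_nil X ^^ Suc s) e = 0"
  using dexp_nil_power_filtration[where X = X and k = "Suc s" and e = e] filtration_above_step[of "Suc (Suc s)"] by simp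

lemma linear_dexp_inv: "linear (dexp_inv X)"
  unfolding dexp_inv_def by (rule linear_compose_sum) (simp add: linear_dexp_nil_power)

lemma bounded_linear_dexp_inv: "bounded_linear (dexp_inv X)"
  using linear_dexp_inv linear_conv_bounded_linear by blast

lemma dexp_inv_dexp: "dexp_inv X (dexp X e) = e"
proof -
  have "dexp_inv X (dexp X e) = (\<Sum>k\<le>s. (dexp_nil X ^^ k) e - (dexp_nil X ^^ Suc k) e)"
    unfolding dexp_eq_diff dexp_inv_def linear_diff[OF linear_dexp_nil_power] by (simp add: funpow_swap1)
  also have "\<dots> = e" using sum_telescope[of "\<lambda>k. (dexp_nil X ^^ k) e" s] dexp_nil_power_vanish by simp
  finally show ?thesis .
qed

lemma dexp_dexp_inv: "dexp X (dexp_inv X e) = e"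
proof -
  have "dexp X (dexp_inv X e) = (\<Sum>k\<le>s. (dexp_nil X ^^ k) e - (dexp_nil X ^^ Suc k) e)"
    unfolding dexp_eq_diff dexp_inv_def linear_sum[OF linear_dexp_nil] by (simp add: sum_subtractf)
  also have "\<dots> = e" using sum_telescope[of "\<lambda>k. (dexp_nil X ^^ k) e" s] dexp_nil_power_vanish by simp
  finally show ?thesis .
qed

lemma layer_1_dexp_inv: "pr 1 (dexp_inv X e) = pr 1 e"
proof -
  have "pr 1 ((dexp_nil X ^^ k) e) = (if k = 0 then pr 1 e else 0)" for k
  proof (cases k)
    case (Suc k')
    then have "(dexp_nil X ^^ k) e \<in> filtration 2"
      using dexp_nil_power_filtration[where X = X and k = k and e = e] filtration_antimono[of 2 "Suc k"] by auto
    then show ?thesis using layer_filtration Suc by fastforce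
  qed simp
  then show ?thesis unfolding dexp_inv_def layer_sum by simp
qed

text \<open>The higher layers of \<open>dexp_inv X e\<close>, for \<open>e\<close> in the first layer, solve
  \<open>pr i (dexp X Y) = 0\<close> for \<open>i \<ge> 2\<close>.\<close>

lemma layer_dexp_inv:
  assumes "e \<in> V 1" "2 \<le> i"
  shows "pr i (dexp_inv X e) = (\<Sum>n=2..s. ((-1) ^ n / fact n) *\<^sub>R pr i ((br X ^^ (n - 1)) (dexp_inv X e)))"
proof -
  define Y where "Y = dexp_inv X e"
  have "dexp X Y = e" unfolding Y_def by (rule dexp_dexp_inv)
  then have "pr i (dexp X Y) = 0" using layer_V[OF assms(1), of i] assms(2) by simp
  then have "pr i Y = - (\<Sum>m=2..s. ((-1) ^ (m - 1) / fact m) *\<^sub>R pr i ((br X ^^ (m - 1)) Y))"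
    unfolding dexp_eq layer_add layer_sum layer_scale by (simp add: eq_neg_iff_add_eq_0)
  also have "\<dots> = (\<Sum>n=2..s. ((-1) ^ n / fact n) *\<^sub>R pr i ((br X ^^ (n - 1)) Y))"
    unfolding sum_negf[symmetric]
  proof (intro sum.cong refl)
    fix n assume "n \<in> {2..s}"
    then obtain n' where "n = Suc n'" by (cases n) auto
    then show "- (((-1) ^ (n - 1) / fact n) *\<^sub>R pr i ((br X ^^ (n - 1)) Y))
        = ((-1) ^ n / fact n) *\<^sub>R pr i ((br X ^^ (n - 1)) Y)" by simp
  qed
  finally show ?thesis unfolding Y_def .
qed

end

section \<open>Dilations and homogeneous distances\<close>

lemma hom_dist_eq_0_iff: "hom_dist br V s d \<Longrightarrow> d x y = 0 \<longleftrightarrow> x = y"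
  unfolding hom_dist_def by blast

lemma hom_dist_nonneg:
  assumes "hom_dist br V s d" shows "0 \<le> d x y"
proof -
  have "d x x \<le> d x y + d y x" "d x y = d y x"
    using assms unfolding hom_dist_def by blast+
  then show ?thesis using hom_dist_eq_0_iff[OF assms, of x x] by simp
qed

lemma hom_dist_left_invariant: "hom_dist br V s d \<Longrightarrow> d (bch br s z x) (bch br s z y) = d x y"
  unfolding hom_dist_def by blast

lemma eventually_hom_dist_pos:
  assumes "hom_dist br V s d" shows "eventually (\<lambda>h. 0 < d h 0) (at 0)"
proof -
  have "eventually (\<lambda>h. h \<noteq> 0) (at (0::'a))" by (simp add: eventually_at_filter)
  then show ?thesis
    by eventually_elim (metis hom_dist_nonneg[OF assms] hom_dist_eq_0_iff[OF assms] order_le_less)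
qed

lemma tendsto_hom_dist_0: assumes "hom_dist br V s d" shows "((\<lambda>h. d h 0) \<longlongrightarrow> 0) (at 0)"
proof -
  have "isCont (\<lambda>p. d (fst p) (snd p)) (0, 0)"
    using assms unfolding hom_dist_def by (simp add: continuous_on_eq_continuous_at)
  moreover have "((\<lambda>h. (h, 0::'a)) \<longlongrightarrow> (0, 0)) (at 0)" by (intro tendsto_intros)
  ultimately have "((\<lambda>h. d h 0) \<longlongrightarrow> d 0 0) (at 0)" using isCont_tendsto_compose by fastforce
  then show ?thesis using hom_dist_eq_0_iff[OF assms, of 0 0] by simp
qed

context graded_group
begin

lemma layer_dil: "pr k (dil V s r x) = r ^ k *\<^sub>R pr k x"
proof -
  have "pr k (dil V s r x) = (\<Sum>i=1..s. if i = k then r ^ i *\<^sub>R pr i x else 0)"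
    unfolding dil_def layer_sum layer_scale layer_layer by (intro sum.cong refl) auto
  also have "\<dots> = r ^ k *\<^sub>R pr k x"
    using layer_outside[of k x] by (auto simp: sum.delta)
  finally show ?thesis .
qed

lemma dil_dil: "dil V s r (dil V s t x) = dil V s (r * t) x"
  by (rule layers_eqI) (simp add: layer_dil power_mult_distrib)

lemma dil_1 [simp]: "dil V s 1 x = x"
  by (rule layers_eqI) (simp add: layer_dil)

lemma dil_0 [simp]: "dil V s r 0 = 0"
  by (rule layers_eqI) (simp add: layer_dil)

lemma dil_V: "v \<in> V k \<Longrightarrow> dil V s r v = r ^ k *\<^sub>R v"
  by (rule layers_eqI) (simp add: layer_dil layer_scale layer_V)

lemma tendsto_dil_0: "((\<lambda>r. dil V s r x) \<longlongrightarrow> 0) (at_right 0)"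
proof -
  have "((\<lambda>r. \<Sum>i=1..s. r ^ i *\<^sub>R pr i x) \<longlongrightarrow> (\<Sum>i=1..s. (0::real) ^ i *\<^sub>R pr i x)) (at_right 0)"
    by (intro tendsto_intros)
  moreover have "(\<Sum>i=1..s. (0::real) ^ i *\<^sub>R pr i x) = 0" by (intro sum.neutral) auto
  ultimately show ?thesis unfolding dil_def by simp
qed

lemma hom_dist_dil_0: "hom_dist br V s d \<Longrightarrow> 0 < r \<Longrightarrow> d (dil V s r x) 0 = r * d x 0"
  unfolding hom_dist_def by (metis dil_0)

definition hnorm :: "'a \<Rightarrow> real" where
  "hnorm x = (\<Sum>k=1..s. root k (norm (pr k x)))"

lemma hnorm_nonneg: "0 \<le> hnorm x"
  unfolding hnorm_def by (intro sum_nonneg real_root_ge_zero) simp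

lemma hnorm_dil: assumes "0 < r" shows "hnorm (dil V s r x) = r * hnorm x"
proof -
  have "root k (norm (pr k (dil V s r x))) = r * root k (norm (pr k x))" if "k \<in> {1..s}" for k
  proof -
    have "root k (norm (pr k (dil V s r x))) = root k (r ^ k) * root k (norm (pr k x))"
      using assms by (simp add: layer_dil real_root_mult)
    also have "root k (r ^ k) = r" using that assms by (simp add: real_root_power_cancel)
    finally show ?thesis .
  qed
  then show ?thesis unfolding hnorm_def sum_distrib_left by (intro sum.cong refl) auto
qed

lemma continuous_on_hnorm: "continuous_on UNIV hnorm"
  unfolding hnorm_def
  by (intro continuous_intros continuous_on_compose2[OF continuous_on_real_root[OF continuous_on_id]]
      linear_continuous_on bounded_linear_layer) auto

lemma norm_layer_le_hnorm: assumes "k \<in> {1..s}" shows "norm (pr k x) \<le> hnorm x ^ k"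
proof -
  have "root k (norm (pr k x)) \<le> hnorm x"
    unfolding hnorm_def
    by (rule member_le_sum[of k "{1..s}" "\<lambda>k. root k (norm (pr k x))", OF assms])
       (auto simp: real_root_ge_zero)
  then have "root k (norm (pr k x)) ^ k \<le> hnorm x ^ k"
    by (intro power_mono) (simp_all add: real_root_ge_zero)
  then show ?thesis using assms by simp
qed

lemma hnorm_eq_0_iff: "hnorm x = 0 \<longleftrightarrow> x = 0"
proof
  assume x: "hnorm x = 0"
  show "x = 0"
  proof (rule layers_eqI)
    fix k assume k: "k \<in> {1..s}"
    then have "norm (pr k x) \<le> 0" using norm_layer_le_hnorm[OF k, of x] x by (simp add: zero_power)
    then show "pr k x = pr k 0" by simp
  qed
qed (simp add: hnorm_def)

lemma hnorm_0 [simp]: "hnorm 0 = 0"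
  by (simp add: hnorm_eq_0_iff)

lemma norm_le_hnorm: assumes "hnorm x \<le> 1" shows "norm x \<le> s * hnorm x"
proof -
  have "norm x \<le> (\<Sum>k=1..s. norm (pr k x))"
    using norm_sum[of "\<lambda>k. pr k x" "{1..s}"] sum_layers[of x] by simp
  also have "\<dots> \<le> (\<Sum>k=1..s. hnorm x)"
  proof (rule sum_mono)
    fix k assume k: "k \<in> {1..s}"
    have "hnorm x ^ k \<le> hnorm x ^ 1"
      using k assms hnorm_nonneg[of x] by (intro power_decreasing) auto
    then show "norm (pr k x) \<le> hnorm x" using norm_layer_le_hnorm[OF k, of x] by simp
  qed
  finally show ?thesis by simp
qed

text \<open>By compactness of the unit sphere of \<open>hnorm\<close>.\<close>

lemma hom_dist_ge_hnorm:
  assumes d: "hom_dist br V s d"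
  shows "\<exists>c>0. \<forall>x. c * hnorm x \<le> d x 0"
proof -
  define K where "K = {x. hnorm x = 1}"
  have "norm x \<le> s" if "x \<in> K" for x using norm_le_hnorm[of x] that by (simp add: K_def)
  then have "bounded K" unfolding bounded_iff by blast
  moreover have "closed K" unfolding K_def
    by (rule closed_Collect_eq) (auto intro: continuous_on_hnorm)
  ultimately have "compact K" by (simp add: compact_eq_bounded_closed)
  have dil_K: "dil V s (1 / hnorm x) x \<in> K" if "x \<noteq> 0" for x
    using that hnorm_dil[of "1 / hnorm x" x] hnorm_nonneg[of x] hnorm_eq_0_iff[of x] unfolding K_def by simp
  have scale: "d x 0 = hnorm x * d (dil V s (1 / hnorm x) x) 0" if "x \<noteq> 0" for x
    using hom_dist_dil_0[OF d, of "hnorm x" "dil V s (1 / hnorm x) x"] that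
      hnorm_nonneg[of x] hnorm_eq_0_iff[of x] by (simp add: dil_dil)
  show ?thesis
  proof (cases "K = {}")
    case True
    then show ?thesis using dil_K hnorm_eq_0_iff by (intro exI[of _ 1]) auto
  next
    case False
    have "continuous_on UNIV (\<lambda>p. d (fst p) (snd p))" using d unfolding hom_dist_def by blast
    moreover have "continuous_on K (\<lambda>x. (x, 0::'a))" by (intro continuous_intros)
    ultimately have "continuous_on K (\<lambda>x. d x 0)" using continuous_on_compose2 by fastforce
    then obtain x0 where x0: "x0 \<in> K" "\<forall>y\<in>K. d x0 0 \<le> d y 0"
      using continuous_attains_inf[OF \<open>compact K\<close> False] by blast
    then have "0 < d x0 0"
      using hom_dist_nonneg[OF d, of x0 0] hom_dist_eq_0_iff[OF d, of x0 0] by (auto simp: K_def order_le_less)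
    moreover have "d x0 0 * hnorm x \<le> d x 0" for x
    proof (cases "x = 0")
      case False
      then have "d x0 0 \<le> d (dil V s (1 / hnorm x) x) 0" using x0(2) dil_K by blast
      then show ?thesis
        using scale[OF False] hnorm_nonneg[of x] by (metis mult.commute mult_left_mono)
    qed (simp add: hom_dist_nonneg[OF d])
    ultimately show ?thesis by blast
  qed
qed

lemma norm_le_hom_dist:
  assumes "hom_dist br V s d"
  obtains C r where "0 < r" "\<And>x. d x 0 \<le> r \<Longrightarrow> norm x \<le> C * d x 0"
proof -
  obtain c where c: "0 < c" "\<And>x. c * hnorm x \<le> d x 0" using hom_dist_ge_hnorm[OF assms] by blast
  have "norm x \<le> (s / c) * d x 0" if "d x 0 \<le> c" for x
  proof -
    have "hnorm x \<le> 1" using c that order_trans[OF c(2)[of x] that] by (simp add: mult_le_cancel_left1)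
    then have "norm x \<le> s * hnorm x" by (rule norm_le_hnorm)
    also have "\<dots> \<le> s * (d x 0 / c)" using c by (intro mult_left_mono) (auto simp: field_simps)
    finally show ?thesis by simp
  qed
  then show ?thesis using that c(1) by blast
qed

lemma norm_layer_le_hom_dist:
  assumes "hom_dist br V s d"
  obtains C where "0 < C" "\<And>x k. k \<in> {1..s} \<Longrightarrow> norm (pr k x) \<le> (C * d x 0) ^ k"
proof -
  obtain c where c: "0 < c" "\<And>x. c * hnorm x \<le> d x 0" using hom_dist_ge_hnorm[OF assms] by blast
  have "norm (pr k x) \<le> (1 / c * d x 0) ^ k" if "k \<in> {1..s}" for x k
  proof -
    have "hnorm x \<le> 1 / c * d x 0" using c(1) c(2)[of x] by (simp add: field_simps)
    then have "hnorm x ^ k \<le> (1 / c * d x 0) ^ k" by (intro power_mono hnorm_nonneg)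
    then show ?thesis using norm_layer_le_hnorm[OF that, of x] by linarith
  qed
  with c(1) show ?thesis by (intro that[of "1 / c"]) auto
qed

end

section \<open>Homogeneous subadditive functions\<close>

context graded_group
begin

fun bch_list :: "'a list \<Rightarrow> 'a" where
  "bch_list [] = 0"
| "bch_list (x # xs) = bch br s x (bch_list xs)"

lemma bch_list_filtration:
  "\<forall>x\<in>set xs. x \<in> filtration a \<Longrightarrow>
   bch_list xs \<in> filtration a \<and> pr a (bch_list xs) = sum_list (map (pr a) xs)"
  by (induction xs) (auto simp: filtration_0 bch_filtration)

lemma continuous_on_bch_list:
  "\<forall>f\<in>set fs. continuous_on S f \<Longrightarrow> continuous_on S (\<lambda>h. bch_list (map (\<lambda>f. f h) fs))"
  by (induction fs) (auto intro: continuous_on_bch)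

lemma layer_bch_list_basis:
  fixes a :: nat and h :: 'a
  assumes "set bl = Basis" "distinct bl"
  defines "w \<equiv> bch_list (map (\<lambda>b. (pr a h \<bullet> b) *\<^sub>R pr a b) bl)"
  shows "w \<in> filtration a" "pr a w = pr a h"
proof -
  have letters: "\<forall>x\<in>set (map (\<lambda>b. (pr a h \<bullet> b) *\<^sub>R pr a b) bl). x \<in> filtration a"
    using V_filtration[OF subspace_scale[OF subspace_V layer_in_V]] by auto
  then show "w \<in> filtration a" unfolding w_def using bch_list_filtration by blast
  have "pr a w = (\<Sum>b\<in>Basis. (pr a h \<bullet> b) *\<^sub>R pr a b)"
    unfolding w_def using bch_list_filtration[OF letters] assms
    by (simp add: sum_list_distinct_conv_sum_set o_def layer_scale layer_layer)
  also have "\<dots> = pr a (\<Sum>b\<in>Basis. (pr a h \<bullet> b) *\<^sub>R b)"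
    by (simp add: layer_sum layer_scale)
  also have "\<dots> = pr a h" by (simp add: euclidean_representation layer_layer)
  finally show "pr a w = pr a h" .
qed

end

locale homogeneous_subadditive = graded_group +
  fixes \<phi> :: "'a \<Rightarrow> real"
  assumes nonneg: "0 \<le> \<phi> h"
    and subadditive: "\<phi> (bch br s a b) \<le> \<phi> a + \<phi> b"
    and homogeneous: "0 < r \<Longrightarrow> \<phi> (dil V s r h) = r * \<phi> h"
begin

lemma at_zero [simp]: "\<phi> 0 = 0"
  using homogeneous[of 2 0] by simp

lemma bch_list_le_sum: "\<phi> (bch_list xs) \<le> sum_list (map \<phi> xs)"
  by (induction xs) (auto intro: order_trans[OF subadditive])

lemma scaleR_V_le:
  assumes v: "v \<in> V a" and a: "1 \<le> a"
  shows "\<phi> (c *\<^sub>R v) \<le> root a \<bar>c\<bar> * (\<phi> v + \<phi> (- v))"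
proof (cases "c = 0")
  case False
  define t where "t = root a \<bar>c\<bar>"
  have t: "0 < t" "t ^ a = \<bar>c\<bar>" unfolding t_def using False a by (simp_all add: real_root_gt_zero)
  have "c *\<^sub>R v = dil V s t v \<or> c *\<^sub>R v = dil V s t (- v)"
    using dil_V[OF v] dil_V[OF subspace_neg[OF subspace_V v]] t by (cases "c > 0") simp_all
  then have "\<phi> (c *\<^sub>R v) = t * \<phi> v \<or> \<phi> (c *\<^sub>R v) = t * \<phi> (- v)"
    using homogeneous[OF t(1)] by auto
  then show ?thesis using nonneg[of v] nonneg[of "- v"] t unfolding t_def by (auto simp: distrib_left)
qed simp

lemma bounded_bch_list_layer:
  assumes "1 \<le> a"
  shows "\<exists>K. \<forall>h. norm h \<le> R \<longrightarrow> \<phi> (bch_list (map (\<lambda>b. (pr a h \<bullet> b) *\<^sub>R pr a b) bl)) \<le> K"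
proof -
  obtain C where C: "\<And>x. norm (pr a x) \<le> norm x * C" "0 < C"
    using bounded_linear.pos_bounded[OF bounded_linear_layer] by blast
  define K where "K = sum_list (map (\<lambda>b. root a (R * C * norm b) * (\<phi> (pr a b) + \<phi> (- pr a b))) bl)"
  have "\<phi> (bch_list (map (\<lambda>b. (pr a h \<bullet> b) *\<^sub>R pr a b) bl)) \<le> K" if h: "norm h \<le> R" for h
  proof -
    have "\<phi> ((pr a h \<bullet> b) *\<^sub>R pr a b) \<le> root a (R * C * norm b) * (\<phi> (pr a b) + \<phi> (- pr a b))" for b
    proof -
      have "\<bar>pr a h \<bullet> b\<bar> \<le> norm (pr a h) * norm b" by (rule Cauchy_Schwarz_ineq2)
      also have "\<dots> \<le> R * C * norm b"
        using C(1)[of h] mult_right_mono[OF h less_imp_le[OF C(2)]] by (intro mult_right_mono) simp_all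
      finally have "root a \<bar>pr a h \<bullet> b\<bar> \<le> root a (R * C * norm b)" using assms by simp
      then show ?thesis
        using scaleR_V_le[OF layer_in_V assms] nonneg by (meson add_nonneg_nonneg mult_right_mono order_trans)
    qed
    then show ?thesis
      using bch_list_le_sum[of "map (\<lambda>b. (pr a h \<bullet> b) *\<^sub>R pr a b) bl"] unfolding K_def map_map o_def
      by (meson order_trans sum_list_mono)
  qed
  then show ?thesis by blast
qed

text \<open>Write \<open>h = p\<cdot>c\<close> with \<open>p\<close> a product of multiples of the basis vectors of the \<open>a\<close>-th layer,
  which \<open>\<phi>\<close> bounds by homogeneity, and \<open>c\<close> of higher filtration degree.\<close>

lemma bounded_on_filtration_step:
  assumes a: "1 \<le> a" and bounded: "\<And>R. \<exists>K. \<forall>h\<in>filtration (Suc a). norm h \<le> R \<longrightarrow> \<phi> h \<le> K"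
  shows "\<exists>K. \<forall>h\<in>filtration a. norm h \<le> R \<longrightarrow> \<phi> h \<le> K"
proof -
  obtain bl where bl: "set bl = (Basis :: 'a set)" "distinct bl"
    using finite_distinct_list[OF finite_Basis] by blast
  define p where "p h = bch_list (map (\<lambda>b. (pr a h \<bullet> b) *\<^sub>R pr a b) bl)" for h
  define c where "c h = ldiv (p h) h" for h
  have "\<forall>f\<in>set (map (\<lambda>b h. (pr a h \<bullet> b) *\<^sub>R pr a b) bl). continuous_on UNIV f"
    by (auto intro!: continuous_intros linear_continuous_on[OF bounded_linear_layer])
  from continuous_on_bch_list[OF this] have "continuous_on UNIV p"
    unfolding p_def by (simp add: o_def)
  then have "continuous_on UNIV c" unfolding c_def by (intro continuous_on_ldiv continuous_on_id)
  then have "compact (c ` cball 0 R)" by (rule compact_continuous_image[OF continuous_on_subset]) auto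
  then obtain R' where R': "\<And>h. norm h \<le> R \<Longrightarrow> norm (c h) \<le> R'"
    using compact_imp_bounded bounded_iff by (metis image_eqI mem_cball_0)
  obtain K' where K': "\<forall>h\<in>filtration (Suc a). norm h \<le> R' \<longrightarrow> \<phi> h \<le> K'" using bounded by blast
  obtain K where K: "\<forall>h. norm h \<le> R \<longrightarrow> \<phi> (p h) \<le> K"
    using bounded_bch_list_layer[OF a] unfolding p_def by blast
  have "\<phi> h \<le> K + K'" if h: "h \<in> filtration a" "norm h \<le> R" for h
  proof -
    have "c h \<in> filtration (Suc a)"
      unfolding c_def p_def using layer_bch_list_basis[OF bl] h by (intro ldiv_filtration) auto
    then have "\<phi> (c h) \<le> K'" using K' R' h by auto
    moreover have "\<phi> h \<le> \<phi> (p h) + \<phi> (c h)" using subadditive[of "p h" "c h"] by (simp add: c_def bch_ldiv)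
    ultimately show ?thesis using K h by fastforce
  qed
  then show ?thesis by blast
qed

lemma bounded_on_bounded: "\<exists>K. \<forall>h. norm h \<le> R \<longrightarrow> \<phi> h \<le> K"
proof -
  have "\<forall>R. \<exists>K. \<forall>h\<in>filtration 1. norm h \<le> R \<longrightarrow> \<phi> h \<le> K"
  proof (rule inc_induct[where P = "\<lambda>a. \<forall>R. \<exists>K. \<forall>h\<in>filtration a. norm h \<le> R \<longrightarrow> \<phi> h \<le> K"])
    show "\<forall>R. \<exists>K. \<forall>h\<in>filtration (Suc s). norm h \<le> R \<longrightarrow> \<phi> h \<le> K"
      using filtration_above_step[of "Suc s"] by auto
  qed (use bounded_on_filtration_step in auto)
  then show ?thesis using filtration_le_1[of 1] by simp
qed

lemma le_hom_dist:
  assumes d: "hom_dist br V s d"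
  shows "\<exists>K. \<forall>h. \<phi> h \<le> K * d h 0"
proof -
  obtain K where K: "\<And>h. norm h \<le> s \<Longrightarrow> \<phi> h \<le> K" using bounded_on_bounded by blast
  obtain c where c: "0 < c" "\<And>x. c * hnorm x \<le> d x 0" using hom_dist_ge_hnorm[OF d] by blast
  have "\<phi> h \<le> (max K 0 / c) * d h 0" for h
  proof (cases "h = 0")
    case False
    then have t: "0 < hnorm h" using hnorm_nonneg[of h] hnorm_eq_0_iff[of h] by simp
    define u where "u = dil V s (1 / hnorm h) h"
    have "hnorm u = 1" unfolding u_def using hnorm_dil[of "1 / hnorm h" h] t by simp
    then have "\<phi> u \<le> max K 0" using K norm_le_hnorm[of u] by fastforce
    moreover have "\<phi> h = hnorm h * \<phi> u"
      using homogeneous[OF t, of u] t by (simp add: u_def dil_dil)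
    ultimately have "\<phi> h \<le> hnorm h * max K 0" using t by (simp add: mult_left_mono)
    also have "\<dots> \<le> (d h 0 / c) * max K 0"
      using c by (intro mult_right_mono) (auto simp: field_simps mult.commute)
    finally show ?thesis by (simp add: field_simps)
  qed (use hom_dist_nonneg[OF d] c in simp)
  then show ?thesis by blast
qed

end

lemma hhom_le_hom_dist:
  assumes G: "graded_algebra brG VG sG" and M: "graded_algebra brM VM sM"
    and L: "hhom brG VG sG brM VM sM L" and d: "hom_dist brG VG sG d" and \<rho>: "hom_dist brM VM sM \<rho>"
  shows "\<exists>K. \<forall>h. \<rho> (L h) 0 \<le> K * d h 0"
proof -
  interpret G: graded_group brG VG sG by (rule graded_group.intro[OF G])
  interpret M: graded_group brM VM sM by (rule graded_group.intro[OF M])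
  interpret homogeneous_subadditive brG VG sG "\<lambda>h. \<rho> (L h) 0"
  proof
    show "0 \<le> \<rho> (L h) 0" for h by (rule hom_dist_nonneg[OF \<rho>])
    show "\<rho> (L (bch brG sG a b)) 0 \<le> \<rho> (L a) 0 + \<rho> (L b) 0" for a b
    proof -
      have "\<rho> (bch brM sM (L a) (L b)) 0 \<le> \<rho> (bch brM sM (L a) (L b)) (L a) + \<rho> (L a) 0"
        using \<rho> unfolding hom_dist_def by blast
      also have "\<rho> (bch brM sM (L a) (L b)) (L a) = \<rho> (L b) 0"
        using hom_dist_left_invariant[OF \<rho>, of "L a" "L b" 0] by simp
      finally show ?thesis using L unfolding hhom_def by simp
    qed
    show "\<rho> (L (dil VG sG r h)) 0 = r * \<rho> (L h) 0" if "0 < r" for r h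
      using L M.hom_dist_dil_0[OF \<rho> that] that unfolding hhom_def by simp
  qed
  show ?thesis by (rule le_hom_dist[OF d])
qed

section \<open>First-order expansion of a P-differentiable map\<close>

lemma bigo_imp_tendsto_0:
  fixes f g :: "'x \<Rightarrow> real"
  assumes "f \<in> O[F](g)" "(g \<longlongrightarrow> 0) F"
  shows "(f \<longlongrightarrow> 0) F"
proof -
  obtain c where "eventually (\<lambda>h. norm (f h) \<le> c * norm (g h)) F"
    using landau_o.bigE[OF assms(1)] by blast
  moreover have "((\<lambda>h. c * norm (g h)) \<longlongrightarrow> 0) F"
    using tendsto_mult_right_zero[OF tendsto_norm_zero[OF assms(2)]] by simp
  ultimately show ?thesis by (rule Lim_null_comparison)
qed

lemma norm_bigo_imp_tendsto_0:
  "(\<lambda>h. norm (b h)) \<in> O[F](g) \<Longrightarrow> (g \<longlongrightarrow> 0) F \<Longrightarrow> (b \<longlongrightarrow> 0) F"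
  using bigo_imp_tendsto_0 tendsto_norm_zero_cancel by blast

lemma norm_smallo_add:
  assumes "(\<lambda>h. norm (a h)) \<in> o[F](g)" "(\<lambda>h. norm (b h)) \<in> o[F](g)"
  shows "(\<lambda>h. norm (a h + b h)) \<in> o[F](g)"
proof -
  have "(\<lambda>h. norm (a h + b h)) \<in> O[F](\<lambda>h. norm (a h) + norm (b h))"
    by (intro bigoI[of _ 1] always_eventually allI) (simp add: norm_triangle_ineq)
  then show ?thesis using sum_in_smallo(1)[OF assms] by (rule landau_o.big_small_trans)
qed

lemma norm_smallo_diff:
  "(\<lambda>h. norm (a h)) \<in> o[F](g) \<Longrightarrow> (\<lambda>h. norm (b h)) \<in> o[F](g) \<Longrightarrow> (\<lambda>h. norm (a h - b h)) \<in> o[F](g)"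
  using norm_smallo_add[of a F g "\<lambda>h. - b h"] by simp

lemma norm_smallo_bounded_linear:
  assumes "(\<lambda>h. norm (a h)) \<in> o[F](g)" "bounded_linear T"
  shows "(\<lambda>h. norm (T (a h))) \<in> o[F](g)"
proof -
  obtain C where "\<And>x. norm (T x) \<le> norm x * C" using bounded_linear.bounded[OF assms(2)] by blast
  then have "(\<lambda>h. norm (T (a h))) \<in> O[F](\<lambda>h. norm (a h))"
    by (intro bigoI[of _ C] always_eventually allI) (simp add: mult.commute)
  then show ?thesis using assms(1) by (rule landau_o.big_small_trans)
qed

lemma has_derivative_remainder_smallo:
  assumes "(f has_derivative f') (at a)" and "(u \<longlongrightarrow> a) F"
  shows "(\<lambda>h. norm (f (u h) - f a - f' (u h - a))) \<in> o[F](\<lambda>h. norm (u h - a))"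
proof (rule landau_o.smallI)
  fix c :: real assume "0 < c"
  then obtain \<eta> where \<eta>: "0 < \<eta>" "\<And>y. norm (y - a) < \<eta> \<Longrightarrow> norm (f y - f a - f' (y - a)) \<le> c * norm (y - a)"
    using assms(1) unfolding has_derivative_at_alt by blast
  have "eventually (\<lambda>h. norm (u h - a) < \<eta>) F"
    using tendstoD[OF assms(2) \<eta>(1)] by (simp add: dist_norm)
  then show "eventually (\<lambda>h. norm (norm (f (u h) - f a - f' (u h - a))) \<le> c * norm (norm (u h - a))) F"
    by eventually_elim (simp add: \<eta>(2))
qed

context graded_group
begin

lemma norm_bigo_hom_dist:
  assumes d: "hom_dist br V s d" and "((\<lambda>h. d (v h) 0) \<longlongrightarrow> 0) F"
  shows "(\<lambda>h. norm (v h)) \<in> O[F](\<lambda>h. d (v h) 0)"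
proof -
  obtain C r where r: "0 < r" "\<And>x. d x 0 \<le> r \<Longrightarrow> norm x \<le> C * d x 0"
    using norm_le_hom_dist[OF d] by metis
  have "eventually (\<lambda>h. d (v h) 0 < r) F" using order_tendstoD(2)[OF assms(2) r(1)] .
  then have "eventually (\<lambda>h. norm (norm (v h)) \<le> C * norm (d (v h) 0)) F"
    by eventually_elim (simp add: r(2) hom_dist_nonneg[OF d])
  then show ?thesis by (rule bigoI)
qed

text \<open>A point at homogeneous distance \<open>O(\<delta>)\<close> from the origin has its \<open>k\<close>-th layer of size
  \<open>O(\<delta>\<^sup>k)\<close>.\<close>

lemma layer_smallo_hom_dist:
  assumes d: "hom_dist br V s d" and v: "(\<lambda>h. d (v h) 0) \<in> O[F](\<delta>)" and \<delta>: "(\<delta> \<longlongrightarrow> 0) F"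
    and k: "2 \<le> k"
  shows "(\<lambda>h. norm (pr k (v h))) \<in> o[F](\<delta>)"
proof (cases "k \<le> s")
  case True
  obtain C where C: "0 < C" "\<And>x k. k \<in> {1..s} \<Longrightarrow> norm (pr k x) \<le> (C * d x 0) ^ k"
    using norm_layer_le_hom_dist[OF d] by metis
  obtain k' where k': "k = Suc (Suc k')" using k by (metis add_2_eq_Suc le_Suc_ex)
  define \<rho> where "\<rho> h = C * d (v h) 0" for h
  have \<rho>: "\<rho> \<in> O[F](\<delta>)" using v C(1) unfolding \<rho>_def by simp
  then have "(\<lambda>h. \<rho> h ^ Suc k') \<in> o[F](\<lambda>_. 1)"
    using bigo_imp_tendsto_0[OF \<rho> \<delta>] by (intro smalloI_tendsto) (auto intro!: tendsto_eq_intros)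
  from landau_o.big_small_mult[OF \<rho> this] have "(\<lambda>h. \<rho> h ^ k) \<in> o[F](\<delta>)"
    by (simp add: k')
  moreover have "(\<lambda>h. norm (pr k (v h))) \<in> O[F](\<lambda>h. \<rho> h ^ k)"
    using C(2)[of k] True k
    by (intro bigoI[of _ 1] always_eventually allI) (auto simp: \<rho>_def intro: order_trans[OF _ abs_ge_self])
  ultimately show ?thesis using landau_o.big_small_trans by blast
qed (simp add: layer_outside)

lemma bch_first_order:
  assumes "(u \<longlongrightarrow> 0) F" "(w \<longlongrightarrow> 0) F"
  shows "(\<lambda>h. norm (bch br s (u h) (w h) - (u h + w h))) \<in> o[F](\<lambda>h. norm (u h) + norm (w h))"
proof -
  have "((\<lambda>h. (u h, w h)) \<longlongrightarrow> (0, 0)) F" using tendsto_Pair[OF assms] by simp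
  from has_derivative_remainder_smallo[OF has_derivative_bch_0 this]
  have "(\<lambda>h. norm (bch br s (u h) (w h) - (u h + w h))) \<in> o[F](\<lambda>h. norm (u h, w h))" by simp
  moreover have "(\<lambda>h. norm (u h, w h)) \<in> O[F](\<lambda>h. norm (u h) + norm (w h))"
    using norm_Pair_le by (intro bigoI[of _ 1] always_eventually allI) (simp add: order_trans[OF _ abs_ge_self])
  ultimately show ?thesis by (rule landau_o.small_big_trans)
qed

lemma bch_neg_smallo:
  assumes u: "(\<lambda>h. norm (u h)) \<in> O[F](\<delta>)" and z: "(\<lambda>h. norm (bch br s (- u h) (w h))) \<in> o[F](\<delta>)"
    and \<delta>: "(\<delta> \<longlongrightarrow> 0) F"
  shows "(\<lambda>h. norm (w h)) \<in> O[F](\<delta>)" "(\<lambda>h. norm (w h - u h)) \<in> o[F](\<delta>)"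
proof -
  define z where "z h = bch br s (- u h) (w h)" for h
  define r where "r h = z h - (- u h + w h)" for h
  have u0: "((\<lambda>h. - u h) \<longlongrightarrow> 0) F"
    using tendsto_minus[OF norm_bigo_imp_tendsto_0[OF u \<delta>]] by simp
  have w0: "(w \<longlongrightarrow> 0) F"
    using tendsto_bch_cancel_left[OF u0, of w 0] norm_bigo_imp_tendsto_0[OF landau_o.small_imp_big[OF z] \<delta>]
    by simp
  have r: "(\<lambda>h. norm (r h)) \<in> o[F](\<lambda>h. norm (u h) + norm (w h))"
    using bch_first_order[OF u0 w0] by (simp add: r_def z_def)
  have "eventually (\<lambda>h. norm (r h) \<le> 1/2 * (norm (u h) + norm (w h))) F"
    using landau_o.smallD[OF r, of "1/2"] by simp
  then have "eventually (\<lambda>h. norm (norm (w h)) \<le> 1 * norm (2 * norm (z h) + 3 * norm (u h))) F"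
  proof eventually_elim
    case (elim h)
    have "norm (w h) = norm ((z h - r h) + u h)" by (simp add: r_def)
    also have "\<dots> \<le> norm (z h) + norm (r h) + norm (u h)"
      using norm_triangle_ineq[of "z h - r h" "u h"] norm_triangle_ineq4[of "z h" "r h"] by simp
    finally show ?case using elim by simp
  qed
  then have "(\<lambda>h. norm (w h)) \<in> O[F](\<lambda>h. 2 * norm (z h) + 3 * norm (u h))" by (rule bigoI)
  moreover have "(\<lambda>h. 2 * norm (z h) + 3 * norm (u h)) \<in> O[F](\<delta>)"
    using u landau_o.small_imp_big[OF z] by (intro sum_in_bigo) (simp_all add: z_def)
  ultimately show w: "(\<lambda>h. norm (w h)) \<in> O[F](\<delta>)" by (rule landau_o.big_trans)
  from r sum_in_bigo(1)[OF u w] have "(\<lambda>h. norm (r h)) \<in> o[F](\<delta>)" by (rule landau_o.small_big_trans)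
  then have "(\<lambda>h. norm (z h - r h)) \<in> o[F](\<delta>)" using z by (intro norm_smallo_diff) (simp_all add: z_def)
  then show "(\<lambda>h. norm (w h - u h)) \<in> o[F](\<delta>)" by (simp add: r_def algebra_simps)
qed

lemma bch_translate_smallo:
  assumes g: "(\<lambda>h. norm (g h)) \<in> O[F](\<delta>)" and \<delta>: "(\<delta> \<longlongrightarrow> 0) F"
    and gY: "\<And>h. g h = bch br s (- X) (X + Y h)"
  shows "(\<lambda>h. norm (Y h - dexp_inv X (g h))) \<in> o[F](\<delta>)"
proof -
  define r where "r h = g h - dexp X (Y h)" for h
  have "((\<lambda>h. X + Y h) \<longlongrightarrow> X) F"
    using tendsto_bch_cancel_left[OF tendsto_const[of "- X"], of "\<lambda>h. X + Y h" X]
      norm_bigo_imp_tendsto_0[OF g \<delta>] by (simp flip: gY)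
  then have "((\<lambda>h. X + Y h - X) \<longlongrightarrow> X - X) F" by (intro tendsto_diff tendsto_const)
  then have "(Y \<longlongrightarrow> 0) F" by simp
  from has_derivative_remainder_smallo[OF has_derivative_bch_translate this]
  have r: "(\<lambda>h. norm (r h)) \<in> o[F](\<lambda>h. norm (Y h))" by (simp add: r_def gY)
  obtain C where C: "\<And>v. norm (dexp_inv X v) \<le> norm v * C" "0 < C"
    using bounded_linear.pos_bounded[OF bounded_linear_dexp_inv] by blast
  have Y: "Y h = dexp_inv X (g h) - dexp_inv X (r h)" for h
    using linear_diff[OF linear_dexp_inv] dexp_inv_dexp by (simp add: r_def)
  have "eventually (\<lambda>h. norm (r h) \<le> 1 / (2 * C) * norm (Y h)) F"
    using landau_o.smallD[OF r, of "1 / (2 * C)"] C(2) by simp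
  then have "eventually (\<lambda>h. norm (norm (Y h)) \<le> (2 * C) * norm (norm (g h))) F"
  proof eventually_elim
    case (elim h)
    have "norm (Y h) \<le> norm (dexp_inv X (g h)) + norm (dexp_inv X (r h))"
      unfolding Y by (rule norm_triangle_ineq4)
    also have "\<dots> \<le> norm (g h) * C + norm (Y h) / 2"
      using C(1)[of "g h"] C(1)[of "r h"] mult_right_mono[OF elim less_imp_le[OF C(2)]] C(2) by simp
    finally show ?case by (simp add: field_simps)
  qed
  then have "(\<lambda>h. norm (Y h)) \<in> O[F](\<lambda>h. norm (g h))" by (rule bigoI)
  then have "(\<lambda>h. norm (Y h)) \<in> O[F](\<delta>)" using g by (rule landau_o.big_trans)
  with r have "(\<lambda>h. norm (r h)) \<in> o[F](\<delta>)" by (rule landau_o.small_big_trans)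
  then show ?thesis by (simp add: Y norm_smallo_bounded_linear[OF _ bounded_linear_dexp_inv])
qed

end

context graded_group
begin

lemma hhom_near_0:
  assumes G: "graded_algebra brG VG sG" and L: "hhom brG VG sG br V s L"
    and d: "hom_dist brG VG sG d" and \<rho>: "hom_dist br V s \<rho>"
  shows "(\<lambda>h. norm (L h)) \<in> O[at 0](\<lambda>h. d h 0)"
    and "(\<lambda>h. norm (L h - pr 1 (L h))) \<in> o[at 0](\<lambda>h. d h 0)"
proof -
  have \<delta>0: "((\<lambda>h. d h 0) \<longlongrightarrow> 0) (at 0)" by (rule tendsto_hom_dist_0[OF d])
  obtain K where "\<forall>h. \<rho> (L h) 0 \<le> K * d h 0" using hhom_le_hom_dist[OF G graded L d \<rho>] by blast
  then have L\<rho>: "(\<lambda>h. \<rho> (L h) 0) \<in> O[at 0](\<lambda>h. d h 0)"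
    by (intro bigoI[of _ K] always_eventually) (simp add: hom_dist_nonneg[OF \<rho>] hom_dist_nonneg[OF d])
  have "(\<lambda>h. norm (L h)) \<in> O[at 0](\<lambda>h. \<rho> (L h) 0)"
    by (intro norm_bigo_hom_dist[OF \<rho>] bigo_imp_tendsto_0[OF L\<rho> \<delta>0])
  then show "(\<lambda>h. norm (L h)) \<in> O[at 0](\<lambda>h. d h 0)" using L\<rho> by (rule landau_o.big_trans)
  have "(\<lambda>h. norm (L h - pr 1 (L h))) \<in> O[at 0](\<lambda>h. \<Sum>k=2..s. norm (pr k (L h)))"
  proof (intro bigoI[of _ 1] always_eventually allI)
    fix h
    have "L h - pr 1 (L h) = (\<Sum>k=2..s. pr k (L h))"
      using sum_layers_from_2[of "L h"] by (metis add_diff_cancel_left')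
    then show "norm (norm (L h - pr 1 (L h))) \<le> 1 * norm (\<Sum>k=2..s. norm (pr k (L h)))"
      using norm_sum[of "\<lambda>k. pr k (L h)" "{2..s}"] by simp
  qed
  moreover have "(\<lambda>h. \<Sum>k=2..s. norm (pr k (L h))) \<in> o[at 0](\<lambda>h. d h 0)"
    using layer_smallo_hom_dist[OF \<rho> L\<rho> \<delta>0] by (intro big_sum_in_smallo) simp
  ultimately show "(\<lambda>h. norm (L h - pr 1 (L h))) \<in> o[at 0](\<lambda>h. d h 0)"
    by (rule landau_o.big_small_trans)
qed

lemma P_diff_remainder_smallo:
  assumes d: "hom_dist brG VG sG d" and \<rho>: "hom_dist br V s \<rho>"
    and f: "P_diff brG VG sG d br V s \<rho> f x Df"
  shows "(\<lambda>h. norm (bch br s (- Df h) (bch br s (- f x) (f (bch brG sG x h))))) \<in> o[at 0](\<lambda>h. d h 0)"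
proof -
  define z where "z h = bch br s (- Df h) (bch br s (- f x) (f (bch brG sG x h)))" for h
  have "\<rho> (bch br s (- f x) (f (bch brG sG x h))) (Df h) = \<rho> (z h) 0" for h
    using hom_dist_left_invariant[OF \<rho>, of "- Df h" _ "Df h"] by (simp add: z_def)
  then have "(\<lambda>h. \<rho> (z h) 0) \<in> o[at 0](\<lambda>h. d h 0)"
    using f eventually_hom_dist_pos[OF d] unfolding P_diff_def
    by (intro smalloI_tendsto) (auto elim: eventually_mono)
  moreover from this have "(\<lambda>h. norm (z h)) \<in> O[at 0](\<lambda>h. \<rho> (z h) 0)"
    by (intro norm_bigo_hom_dist[OF \<rho>] bigo_imp_tendsto_0[OF landau_o.small_imp_big tendsto_hom_dist_0[OF d]])
  ultimately show ?thesis unfolding z_def[symmetric] using landau_o.big_small_trans by blast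
qed

lemma P_diff_expansion:
  assumes G: "graded_algebra brG VG sG" and d: "hom_dist brG VG sG d" and \<rho>: "hom_dist br V s \<rho>"
    and f: "P_diff brG VG sG d br V s \<rho> f x Df"
  shows "(\<lambda>h. norm (f (bch brG sG x h) - f x - dexp_inv (f x) (pr 1 (Df h)))) \<in> o[at 0](\<lambda>h. d h 0)"
proof -
  define g where "g h = bch br s (- f x) (f (bch brG sG x h))" for h
  have \<delta>0: "((\<lambda>h. d h 0) \<longlongrightarrow> 0) (at 0)" by (rule tendsto_hom_dist_0[OF d])
  have Df: "hhom brG VG sG br V s Df" using f unfolding P_diff_def by blast
  note g = bch_neg_smallo[OF hhom_near_0(1)[OF G Df d \<rho>] P_diff_remainder_smallo[OF d \<rho> f, folded g_def] \<delta>0]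
  from norm_smallo_add[OF g(2) hhom_near_0(2)[OF G Df d \<rho>]]
  have "(\<lambda>h. norm (g h - pr 1 (Df h))) \<in> o[at 0](\<lambda>h. d h 0)" by simp
  then have "(\<lambda>h. norm (dexp_inv (f x) (g h - pr 1 (Df h)))) \<in> o[at 0](\<lambda>h. d h 0)"
    by (rule norm_smallo_bounded_linear[OF _ bounded_linear_dexp_inv])
  moreover have "(\<lambda>h. norm ((f (bch brG sG x h) - f x) - dexp_inv (f x) (g h))) \<in> o[at 0](\<lambda>h. d h 0)"
    by (rule bch_translate_smallo[OF g(1) \<delta>0]) (simp add: g_def)
  ultimately have "(\<lambda>h. norm (((f (bch brG sG x h) - f x) - dexp_inv (f x) (g h))
      + dexp_inv (f x) (g h - pr 1 (Df h)))) \<in> o[at 0](\<lambda>h. d h 0)"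
    by (rule norm_smallo_add[rotated])
  then show ?thesis by (simp add: linear_diff[OF linear_dexp_inv])
qed

lemma P_diff_vec_layer:
  assumes G: "graded_algebra brG VG sG" and d: "hom_dist brG VG sG d" and \<rho>: "hom_dist br V s \<rho>"
    and f: "P_diff brG VG sG d br V s \<rho> f x Df"
  shows "P_diff_vec brG VG sG d (V j) (\<lambda>y. pr j (f y)) x (\<lambda>h. pr j (dexp_inv (f x) (pr 1 (Df h))))"
  unfolding P_diff_vec_def
proof (intro conjI allI impI)
  have hhom: "hhom brG VG sG br V s Df" using f unfolding P_diff_def by blast
  show "pr j (dexp_inv (f x) (pr 1 (Df h))) \<in> V j" for h by (rule layer_in_V)
  show "pr j (dexp_inv (f x) (pr 1 (Df (bch brG sG a b))))
      = pr j (dexp_inv (f x) (pr 1 (Df a))) + pr j (dexp_inv (f x) (pr 1 (Df b)))" for a b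
  proof -
    have "pr 1 (Df (bch brG sG a b)) = pr 1 (Df a) + pr 1 (Df b)"
      using hhom layer_1_bch unfolding hhom_def by simp
    then show ?thesis by (simp add: linear_add[OF linear_dexp_inv] layer_add)
  qed
  show "pr j (dexp_inv (f x) (pr 1 (Df (dil VG sG r h)))) = r *\<^sub>R pr j (dexp_inv (f x) (pr 1 (Df h)))"
    if "0 < r" for r h
    using hhom that by (simp add: hhom_def layer_dil linear_scale[OF linear_dexp_inv] layer_scale)
  have "(\<lambda>h. norm (pr j (f (bch brG sG x h) - f x - dexp_inv (f x) (pr 1 (Df h))))) \<in> o[at 0](\<lambda>h. d h 0)"
    by (rule norm_smallo_bounded_linear[OF P_diff_expansion[OF assms] bounded_linear_layer])
  from smalloD_tendsto[OF this]
  show "((\<lambda>h. norm ((- pr j (f x) + pr j (f (bch brG sG x h))) - pr j (dexp_inv (f x) (pr 1 (Df h)))) / d h 0)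
      \<longlongrightarrow> 0) (at 0)"
    by (simp add: layer_diff)
qed

lemma P_diff_vec_0: "P_diff_vec br V s d W F x L \<Longrightarrow> L 0 = 0"
  unfolding P_diff_vec_def using bch_0_left[of 0] by (metis add_cancel_right_right)

lemma filterlim_dil_at_0: "h \<noteq> 0 \<Longrightarrow> filterlim (\<lambda>r. dil V s r h) (at 0) (at_right 0)"
proof (rule filterlim_atI)
  assume "h \<noteq> 0"
  then have "dil V s r h \<noteq> 0" if "0 < r" for r
    using hnorm_dil[OF that, of h] hnorm_eq_0_iff[of h] hnorm_eq_0_iff[of "dil V s r h"] that by auto
  then show "eventually (\<lambda>r. dil V s r h \<noteq> 0) (at_right 0)"
    by (auto simp: eventually_at_right_field intro: exI[of _ 1])
qed (rule tendsto_dil_0)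

lemma P_diff_vec_diff_tendsto:
  assumes d: "hom_dist br V s d"
    and L1: "P_diff_vec br V s d W F x L1" and L2: "P_diff_vec br V s d W F x L2"
  shows "((\<lambda>k. norm (L1 k - L2 k) / d k 0) \<longlongrightarrow> 0) (at 0)"
proof -
  define R where "R L k = norm ((- F x + F (bch br s x k)) - L k) / d k 0" for L k
  have "(R L1 \<longlongrightarrow> 0) (at 0)" "(R L2 \<longlongrightarrow> 0) (at 0)"
    using L1 L2 unfolding P_diff_vec_def R_def by blast+
  then have R: "((\<lambda>k. R L1 k + R L2 k) \<longlongrightarrow> 0) (at 0)" using tendsto_add_zero by blast
  have "norm (norm (L1 k - L2 k) / d k 0) \<le> R L1 k + R L2 k" for k
  proof -
    define e where "e = - F x + F (bch br s x k)"
    have "norm (L1 k - L2 k) \<le> norm (e - L1 k) + norm (e - L2 k)"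
      using norm_triangle_ineq4[of "e - L2 k" "e - L1 k"] by (simp add: norm_minus_commute add.commute)
    then have "norm (L1 k - L2 k) / d k 0 \<le> norm (e - L1 k) / d k 0 + norm (e - L2 k) / d k 0"
      using hom_dist_nonneg[OF d, of k 0] by (metis add_divide_distrib divide_right_mono)
    then show ?thesis using hom_dist_nonneg[OF d, of k 0] by (simp add: R_def e_def)
  qed
  then show ?thesis by (intro Lim_null_comparison[OF always_eventually R]) blast
qed

text \<open>Along the dilations of a fixed \<open>h\<close> the quotient \<open>norm (L1 k - L2 k) / d k 0\<close> is constant.\<close>

lemma P_diff_vec_unique:
  assumes d: "hom_dist br V s d"
    and L1: "P_diff_vec br V s d W F x L1" and L2: "P_diff_vec br V s d W F x L2"
  shows "L1 = L2"
proof
  fix h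
  show "L1 h = L2 h"
  proof (cases "h = 0")
    case False
    from filterlim_compose[OF P_diff_vec_diff_tendsto[OF assms] filterlim_dil_at_0[OF False]]
    have along: "((\<lambda>r. norm (L1 (dil V s r h) - L2 (dil V s r h)) / d (dil V s r h) 0) \<longlongrightarrow> 0) (at_right 0)" .
    have "eventually (\<lambda>r. norm (L1 (dil V s r h) - L2 (dil V s r h)) / d (dil V s r h) 0
        = norm (L1 h - L2 h) / d h 0) (at_right 0)"
      using L1 L2 hom_dist_dil_0[OF d]
      by (auto simp: eventually_at_right_field P_diff_vec_def simp flip: scaleR_diff_right intro!: exI[of _ 1])
    from tendsto_cong[THEN iffD1, OF this along]
    have "norm (L1 h - L2 h) / d h 0 = 0" by (rule tendsto_unique[OF trivial_limit_at_right_real tendsto_const])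
    moreover have "0 < d h 0"
      using hom_dist_nonneg[OF d, of h 0] hom_dist_eq_0_iff[OF d, of h 0] False by simp
    ultimately show ?thesis by simp
  qed (simp add: P_diff_vec_0[OF L1] P_diff_vec_0[OF L2])
qed

end

theorem theorem4p13:
  fixes brG :: "'g::euclidean_space \<Rightarrow> 'g \<Rightarrow> 'g" and V :: "nat \<Rightarrow> 'g set" and \<iota> :: nat
    and brM :: "'m::euclidean_space \<Rightarrow> 'm \<Rightarrow> 'm" and W :: "nat \<Rightarrow> 'm set" and \<upsilon> :: nat
    and d :: "'g \<Rightarrow> 'g \<Rightarrow> real" and \<rho> :: "'m \<Rightarrow> 'm \<Rightarrow> real"
    and \<Omega> :: "'g set" and f :: "'g \<Rightarrow> 'm" and x :: 'g and Df :: "'g \<Rightarrow> 'm"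
  assumes "stratified brG V \<iota>"
    and "graded_of_step brM W \<upsilon>"
    and "hom_dist brG V \<iota> d"
    and "hom_dist brM W \<upsilon> \<rho>"
    and "open \<Omega>" and "x \<in> \<Omega>"
    and "P_diff brG V \<iota> d brM W \<upsilon> \<rho> f x Df"
  shows "(\<forall>j\<in>{1..\<upsilon>}. \<exists>L. P_diff_vec brG V \<iota> d (W j) (\<lambda>y. layer W \<upsilon> j (f y)) x L) \<and>
         (\<forall>dF. (\<forall>j\<in>{1..\<upsilon>}. P_diff_vec brG V \<iota> d (W j) (\<lambda>y. layer W \<upsilon> j (f y)) x (dF j)) \<longrightarrow>
            (\<forall>h. layer W \<upsilon> 1 (Df h) = dF 1 h) \<and>
            (\<forall>i\<in>{2..\<upsilon>}. \<forall>h. dF i h =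
               (\<Sum>n=2..\<upsilon>. ((-1) ^ n / fact n) *\<^sub>R
                  layer W \<upsilon> i (iter_br brM (n - 1) (f x) (\<Sum>j=1..\<upsilon>. dF j h)))))"
proof -
  have G: "graded_algebra brG V \<iota>" using assms(1) unfolding stratified_def by blast
  interpret G: graded_group brG V \<iota> by (rule graded_group.intro[OF G])
  interpret M: graded_group brM W \<upsilon>
    using assms(2) unfolding graded_of_step_def by (intro graded_group.intro) blast
  let ?diff = "\<lambda>j. P_diff_vec brG V \<iota> d (W j) (\<lambda>y. layer W \<upsilon> j (f y)) x"
  define L where "L j h = layer W \<upsilon> j (M.dexp_inv (f x) (layer W \<upsilon> 1 (Df h)))" for j h
  have L: "?diff j (L j)" for j
    unfolding L_def by (rule M.P_diff_vec_layer[OF G assms(3,4,7)])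
  have dF: "dF j = L j" if "\<forall>j\<in>{1..\<upsilon>}. ?diff j (dF j)" "j \<in> {1..\<upsilon>}" for dF j
    using G.P_diff_vec_unique[OF assms(3) _ L] that by blast
  have sum_dF: "(\<Sum>j=1..\<upsilon>. dF j h) = M.dexp_inv (f x) (layer W \<upsilon> 1 (Df h))"
    if "\<forall>j\<in>{1..\<upsilon>}. ?diff j (dF j)" for dF h
    using dF[OF that] M.sum_layers by (simp add: L_def)
  show ?thesis
  proof (intro conjI allI impI ballI)
    fix dF h assume diff: "\<forall>j\<in>{1..\<upsilon>}. ?diff j (dF j)"
    show "layer W \<upsilon> 1 (Df h) = dF 1 h"
      using dF[OF diff, of 1] M.step_ge_1 M.layer_1_dexp_inv M.layer_layer by (simp add: L_def)
    fix i assume "i \<in> {2..\<upsilon>}"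
    then show "dF i h = (\<Sum>n=2..\<upsilon>. ((-1) ^ n / fact n) *\<^sub>R
        layer W \<upsilon> i (iter_br brM (n - 1) (f x) (\<Sum>j=1..\<upsilon>. dF j h)))"
      using dF[OF diff, of i] sum_dF[OF diff] M.layer_dexp_inv[OF M.layer_in_V, of i]
      by (simp add: L_def iter_br_def)
  qed (use L in blast)
qed

end
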